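(* As formal power series in $q$, $$\gamma^6 = 59049 \xi^{10} - 262440 \xi^{11} + 466560 \xi^{12} - 414720 \xi^{13} + 184320 \xi^{14} - 32768 \xi^{15}.$$
   Context: Let $E(q)=\prod_{m\ge1}(1-q^m)$. Define $$\gamma=\gamma(q)=\frac{E(q)^5E(q^2)^5E(q^6)^5}{E(q^3)^{15}},\qquad \xi=\xi(q)=\frac{E(q^2)^5E(q^6)}{E(q)E(q^3)^5}.$$ *)

theory Defs
  imports "HOL-Computational_Algebra.Formal_Power_Series"
begin

text \<open>The Euler product E(q) = prod_{m>=1} (1 - q^m) as a formal power series:
  its n-th coefficient is the n-th coefficient of the finite product over m = 1..n
  (factors with m > n do not affect coefficients of degree at most n).\<close>
definition euler_E :: "rat fps" where
  "euler_E = Abs_fps (\<lambda>n. fps_nth (\<Prod>m\<in>{1..n}. (1 - fps_X ^ m)) n)"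

definition euler_Ek :: "nat \<Rightarrow> rat fps" where
  "euler_Ek k = fps_compose euler_E (fps_X ^ k)"

definition gamma_fps :: "rat fps" where
  "gamma_fps = euler_Ek 1 ^ 5 * euler_Ek 2 ^ 5 * euler_Ek 6 ^ 5 / euler_Ek 3 ^ 15"

definition xi_fps :: "rat fps" where
  "xi_fps = euler_Ek 2 ^ 5 * euler_Ek 6 / (euler_Ek 1 * euler_Ek 3 ^ 5)"

end

theory Submission
  imports Defs "HOL-Computational_Algebra.Formal_Laurent_Series"
begin

text \<open>Write \<open>E\<^sub>k = E(q\<^sup>k)\<close>. By the Jacobi triple product \<open>\<phi>(-q) = E\<^sub>1\<^sup>2/E\<^sub>2\<close> and \<open>\<psi>(q) = E\<^sub>2\<^sup>2/E\<^sub>1\<close>,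
  and splitting their series by the exponent modulo 3 gives
  \<open>\<phi>(-q) = \<phi>(-q\<^sup>9) - 2q W(q\<^sup>3)\<close> and \<open>\<psi>(q) = D(q\<^sup>3) + q \<psi>(q\<^sup>9)\<close>, where \<open>W\<close> and \<open>D\<close> are again eta quotients
  by the triple product. The norm \<open>N(f) = f(q) f(\<omega>q) f(\<omega>\<^sup>2q)\<close> is multiplicative, sends \<open>E\<^sub>1\<close> and \<open>E\<^sub>2\<close>
  to \<open>E\<^sub>3\<^sup>4/E\<^sub>9\<close> and \<open>E\<^sub>6\<^sup>4/E\<^sub>1\<^sub>8\<close>, and sends \<open>A + qB\<close> with \<open>A, B\<close> series in \<open>q\<^sup>3\<close> to \<open>A\<^sup>3 + q\<^sup>3B\<^sup>3\<close>.
  Taking norms of the two dissections therefore gives two identities between \<open>E\<^sub>3, E\<^sub>6, E\<^sub>9, E\<^sub>1\<^sub>8\<close>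
  and \<open>q\<^sup>3\<close>. Both are linear in \<open>T = q\<^sup>3E\<^sub>3\<^sup>3E\<^sub>1\<^sub>8\<^sup>9/(E\<^sub>6\<^sup>3E\<^sub>9\<^sup>9)\<close>: they say \<open>\<xi>(q\<^sup>3) = 1 + T\<close> and
  \<open>E\<^sub>3\<^sup>8E\<^sub>1\<^sub>8\<^sup>4/(E\<^sub>6\<^sup>4E\<^sub>9\<^sup>8) = 1 - 8T\<close>, while \<open>\<gamma>(q\<^sup>3)\<^sup>6 = \<xi>(q\<^sup>3)\<^sup>1\<^sup>0 (E\<^sub>3\<^sup>8E\<^sub>1\<^sub>8\<^sup>4/(E\<^sub>6\<^sup>4E\<^sub>9\<^sup>8))\<^sup>5\<close>.
  Eliminating \<open>T\<close> and substituting \<open>q\<close> for \<open>q\<^sup>3\<close> gives \<open>\<gamma>\<^sup>6 = \<xi>\<^sup>1\<^sup>0 (9 - 8\<xi>)\<^sup>5\<close>.\<close>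

unbundle fps_syntax

section \<open>Congruences modulo powers of \<open>X\<close> and infinite products\<close>

definition fps_cong :: "nat \<Rightarrow> 'a::comm_ring_1 fps \<Rightarrow> 'a fps \<Rightarrow> bool" where
  "fps_cong n f g \<longleftrightarrow> fps_X ^ n dvd f - g"

lemma fps_cong_iff_nth: "fps_cong n f g \<longleftrightarrow> (\<forall>i<n. f $ i = g $ i)"
proof
  assume "fps_cong n f g"
  then obtain h where h: "f - g = fps_X ^ n * h"
    unfolding fps_cong_def by (elim dvdE)
  show "\<forall>i<n. f $ i = g $ i"
  proof (intro allI impI)
    fix i assume "i < n"
    then have "(f - g) $ i = 0"
      unfolding h by (simp add: fps_X_power_mult_nth)
    then show "f $ i = g $ i" by simp
  qed
next
  assume "\<forall>i<n. f $ i = g $ i"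
  then have "f - g = fps_X ^ n * fps_shift n (f - g)"
    by (auto simp: fps_eq_iff fps_X_power_mult_nth)
  then show "fps_cong n f g"
    unfolding fps_cong_def by (metis dvd_triv_left)
qed

lemma fps_cong_refl [simp]: "fps_cong n f f"
  by (simp add: fps_cong_iff_nth)

lemma fps_cong_trans [trans]: "fps_cong n f g \<Longrightarrow> fps_cong n g h \<Longrightarrow> fps_cong n f h"
  by (simp add: fps_cong_iff_nth)

lemma fps_cong_sym: "fps_cong n f g \<Longrightarrow> fps_cong n g f"
  and fps_cong_mono: "fps_cong n f g \<Longrightarrow> m \<le> n \<Longrightarrow> fps_cong m f g"
  and fps_cong_add: "fps_cong n f g \<Longrightarrow> fps_cong n f' g' \<Longrightarrow> fps_cong n (f + f') (g + g')"
  and fps_cong_diff: "fps_cong n f g \<Longrightarrow> fps_cong n f' g' \<Longrightarrow> fps_cong n (f - f') (g - g')"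
  by (simp_all add: fps_cong_iff_nth)

lemma fps_cong_mult:
  assumes "fps_cong n f g" "fps_cong n f' g'"
  shows "fps_cong n (f * f') (g * g')"
proof -
  have "f * f' - g * g' = f * (f' - g') + (f - g) * g'"
    by (simp add: algebra_simps)
  moreover have "fps_X ^ n dvd f * (f' - g')" "fps_X ^ n dvd (f - g) * g'"
    using assms unfolding fps_cong_def by simp_all
  ultimately show ?thesis
    unfolding fps_cong_def by simp
qed

lemma fps_cong_power: "fps_cong n f g \<Longrightarrow> fps_cong n (f ^ k) (g ^ k)"
  by (induction k) (simp_all add: fps_cong_mult)

lemma fps_cong_sum:
  "(\<And>i. i \<in> S \<Longrightarrow> fps_cong n (f i) (g i)) \<Longrightarrow> fps_cong n (sum f S) (sum g S)"
  by (induction S rule: infinite_finite_induct) (simp_all add: fps_cong_add)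

lemma fps_cong_prod:
  "(\<And>i. i \<in> S \<Longrightarrow> fps_cong n (f i) (g i)) \<Longrightarrow> fps_cong n (prod f S) (prod g S)"
  by (induction S rule: infinite_finite_induct) (simp_all add: fps_cong_mult)

lemma fps_cong_monomial: "n \<le> m \<Longrightarrow> fps_cong n (c * fps_X ^ m) 0"
  by (simp add: fps_cong_iff_nth fps_X_power_mult_right_nth)

lemma fps_eq_by_cong: "(\<And>n. fps_cong n f g) \<Longrightarrow> f = g"
  by (auto simp: fps_cong_iff_nth fps_eq_iff)

lemma fps_cong_compose_X_power:
  fixes f g :: "'a::idom fps"
  assumes "fps_cong n f g" "k \<ge> 1"
  shows "fps_cong n (f oo fps_X ^ k) (g oo fps_X ^ k)"
proof -
  have X0: "(fps_X ^ k :: 'a fps) $ 0 = 0"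
    using assms(2) by simp
  obtain h where h: "f - g = fps_X ^ n * h"
    using assms(1) unfolding fps_cong_def by (elim dvdE)
  have "(f oo fps_X ^ k) - (g oo fps_X ^ k) = (f - g) oo fps_X ^ k"
    by (simp add: fps_compose_sub_distrib)
  also have "\<dots> = (fps_X ^ k) ^ n * (h oo fps_X ^ k)"
    unfolding h by (simp add: fps_compose_mult_distrib[OF X0] fps_X_power_compose[OF X0])
  also have "(fps_X ^ k) ^ n = (fps_X ^ n :: 'a fps) * fps_X ^ ((k - 1) * n)"
  proof -
    have "k * n = n + (k - 1) * n"
      using assms(2) by (cases k) auto
    then show ?thesis
      by (simp add: power_mult[symmetric] power_add[symmetric])
  qed
  finally show ?thesis
    unfolding fps_cong_def by (simp add: mult.assoc)
qed

definition fps_near_one :: "(nat \<Rightarrow> 'a::comm_ring_1 fps) \<Rightarrow> bool" where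
  "fps_near_one f \<longleftrightarrow> (\<forall>k. fps_cong (Suc k) (f k) 1)"

text \<open>Meaningful for \<open>fps_near_one f\<close>: then the factors with index \<open>k \<ge> n\<close> are \<open>1 + O(q^(n+1))\<close>,
  so the partial products from \<open>n + 1\<close> factors on all have the coefficient of \<open>q^n\<close> taken here.\<close>
definition fps_infprod :: "(nat \<Rightarrow> 'a::comm_ring_1 fps) \<Rightarrow> 'a fps" where
  "fps_infprod f = Abs_fps (\<lambda>n. (\<Prod>k<Suc n. f k) $ n)"

lemma fps_near_one_monomials:
  assumes "\<And>k. Suc k \<le> d k"
  shows "fps_near_one (\<lambda>k. 1 + c k * fps_X ^ d k)"
  unfolding fps_near_one_def
proof
  fix k
  have "fps_cong (Suc k) (1 + c k * fps_X ^ d k) (1 + 0)"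
    using assms by (intro fps_cong_add fps_cong_refl fps_cong_monomial)
  then show "fps_cong (Suc k) (1 + c k * fps_X ^ d k) 1"
    by simp
qed

lemma fps_near_one_1_minus_X_power:
  "(\<And>k. Suc k \<le> d k) \<Longrightarrow> fps_near_one (\<lambda>k. 1 - fps_X ^ d k)"
  using fps_near_one_monomials[of d "\<lambda>_. -1"] by simp

lemma fps_cong_prod_tail:
  assumes "fps_near_one f" "m \<le> N"
  shows "fps_cong m (\<Prod>k<N. f k) (\<Prod>k<m. f k)"
proof -
  have split: "(\<Prod>k<N. f k) = (\<Prod>k<m. f k) * (\<Prod>k\<in>{m..<N}. f k)"
    using assms(2) by (metis prod.atLeastLessThan_concat lessThan_atLeast0 zero_le)
  have "fps_cong m (\<Prod>k\<in>{m..<N}. f k) (\<Prod>k\<in>{m..<N}. 1)"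
  proof (rule fps_cong_prod)
    fix k assume "k \<in> {m..<N}"
    then show "fps_cong m (f k) 1"
      using assms(1) unfolding fps_near_one_def by (auto intro: fps_cong_mono)
  qed
  then show ?thesis
    unfolding split using fps_cong_mult[OF fps_cong_refl] by fastforce
qed

lemma fps_infprod_cong:
  assumes "fps_near_one f" "n \<le> N"
  shows "fps_cong n (fps_infprod f) (\<Prod>k<N. f k)"
  unfolding fps_cong_iff_nth
proof (intro allI impI)
  fix i assume "i < n"
  then have "fps_cong (Suc i) (\<Prod>k<N. f k) (\<Prod>k<Suc i. f k)"
    using assms by (intro fps_cong_prod_tail) auto
  then show "fps_infprod f $ i = (\<Prod>k<N. f k) $ i"
    by (simp add: fps_infprod_def fps_cong_iff_nth)
qed

lemma fps_infprod_eqI: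
  assumes "fps_near_one f" "\<And>n. \<exists>N\<ge>n. fps_cong n F (\<Prod>k<N. f k)"
  shows "fps_infprod f = F"
proof (rule fps_eq_by_cong)
  fix n
  obtain N where N: "N \<ge> n" "fps_cong n F (\<Prod>k<N. f k)"
    using assms(2) by blast
  have "fps_cong n (fps_infprod f) (\<Prod>k<N. f k)"
    using fps_infprod_cong[OF assms(1) N(1)] .
  also have "fps_cong n \<dots> F"
    using fps_cong_sym[OF N(2)] .
  finally show "fps_cong n (fps_infprod f) F" .
qed

lemma fps_infprod_nth_0: "fps_near_one f \<Longrightarrow> fps_infprod f $ 0 = 1"
  using fps_infprod_cong[of f 1 1] by (simp add: fps_cong_iff_nth fps_near_one_def)

lemma fps_near_one_mult: "fps_near_one f \<Longrightarrow> fps_near_one g \<Longrightarrow> fps_near_one (\<lambda>k. f k * g k)"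
  unfolding fps_near_one_def using fps_cong_mult by fastforce

lemma fps_infprod_mult:
  assumes "fps_near_one f" "fps_near_one g"
  shows "fps_infprod (\<lambda>k. f k * g k) = fps_infprod f * fps_infprod g"
proof (rule fps_infprod_eqI[OF fps_near_one_mult[OF assms]])
  fix n
  have "fps_cong n (fps_infprod f * fps_infprod g) ((\<Prod>k<n. f k) * (\<Prod>k<n. g k))"
    by (intro fps_cong_mult fps_infprod_cong assms) auto
  then show "\<exists>N\<ge>n. fps_cong n (fps_infprod f * fps_infprod g) (\<Prod>k<N. f k * g k)"
    by (auto simp: prod.distrib)
qed

lemma fps_near_one_power: "fps_near_one f \<Longrightarrow> fps_near_one (\<lambda>k. f k ^ m)"
  unfolding fps_near_one_def using fps_cong_power by fastforce

lemma fps_infprod_power: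
  assumes "fps_near_one f"
  shows "fps_infprod (\<lambda>k. f k ^ m) = fps_infprod f ^ m"
proof (rule fps_infprod_eqI[OF fps_near_one_power[OF assms]])
  fix n
  have "fps_cong n (fps_infprod f ^ m) ((\<Prod>k<n. f k) ^ m)"
    by (intro fps_cong_power fps_infprod_cong assms) auto
  then show "\<exists>N\<ge>n. fps_cong n (fps_infprod f ^ m) (\<Prod>k<N. f k ^ m)"
    by (auto simp: prod_power_distrib)
qed

lemma fps_near_one_compose_X_power:
  fixes f :: "nat \<Rightarrow> 'a::idom fps"
  shows "fps_near_one f \<Longrightarrow> k \<ge> 1 \<Longrightarrow> fps_near_one (\<lambda>i. f i oo fps_X ^ k)"
  unfolding fps_near_one_def using fps_cong_compose_X_power[where g = 1] by fastforce

lemma fps_infprod_compose_X_power: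
  fixes f :: "nat \<Rightarrow> 'a::idom fps"
  assumes "fps_near_one f" "k \<ge> 1"
  shows "fps_infprod f oo fps_X ^ k = fps_infprod (\<lambda>i. f i oo fps_X ^ k)"
proof (rule sym, rule fps_infprod_eqI[OF fps_near_one_compose_X_power[OF assms]])
  fix n
  have "fps_cong n (fps_infprod f oo fps_X ^ k) ((\<Prod>i<n. f i) oo fps_X ^ k)"
    by (rule fps_cong_compose_X_power[OF fps_infprod_cong[OF assms(1)] assms(2)]) simp
  also have "(\<Prod>i<n. f i) oo fps_X ^ k = (\<Prod>i<n. f i oo fps_X ^ k)"
    using assms(2) by (simp add: fps_compose_prod_distrib)
  finally show "\<exists>N\<ge>n. fps_cong n (fps_infprod f oo fps_X ^ k) (\<Prod>i<N. f i oo fps_X ^ k)"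
    by blast
qed

lemma prod_lessThan_mult_split:
  fixes f :: "nat \<Rightarrow> 'a::comm_monoid_mult"
  shows "(\<Prod>k<t * N. f k) = (\<Prod>r<t. \<Prod>k<N. f (t * k + r))"
proof (induction N)
  case (Suc N)
  have "t * Suc N = t * N + t"
    by simp
  then have "(\<Prod>k<t * Suc N. f k) = (\<Prod>k<t * N. f k) * (\<Prod>k\<in>{t * N..<t * N + t}. f k)"
    by (simp only: lessThan_atLeast0 prod.atLeastLessThan_concat[symmetric] zero_le le_add1)
  also have "(\<Prod>k\<in>{t * N..<t * N + t}. f k) = (\<Prod>r<t. f (t * N + r))"
    using prod.shift_bounds_nat_ivl[of f 0 "t * N" t]
    by (simp add: lessThan_atLeast0 add.commute)
  finally show ?case
    using Suc by (simp add: prod.distrib)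
qed simp

lemma fps_infprod_residue_classes:
  assumes "fps_near_one f" "t > 0"
  shows "fps_infprod f = (\<Prod>r<t. fps_infprod (\<lambda>k. f (t * k + r)))"
proof (rule sym, rule fps_eq_by_cong)
  fix n
  have near: "fps_near_one (\<lambda>k. f (t * k + r))" for r
    unfolding fps_near_one_def
  proof
    fix k
    have "Suc k \<le> Suc (t * k + r)"
      using assms(2) by (simp add: trans_le_add1)
    then show "fps_cong (Suc k) (f (t * k + r)) 1"
      using assms(1) unfolding fps_near_one_def by (blast intro: fps_cong_mono)
  qed
  have "fps_cong n (\<Prod>r<t. fps_infprod (\<lambda>k. f (t * k + r))) (\<Prod>r<t. \<Prod>k<n. f (t * k + r))"
    by (intro fps_cong_prod fps_infprod_cong[OF near]) simp
  also have "(\<Prod>r<t. \<Prod>k<n. f (t * k + r)) = (\<Prod>k<t * n. f k)"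
    by (rule prod_lessThan_mult_split[symmetric])
  also have "fps_cong n \<dots> (fps_infprod f)"
    using assms by (intro fps_cong_sym[OF fps_infprod_cong]) simp_all
  finally show "fps_cong n (\<Prod>r<t. fps_infprod (\<lambda>k. f (t * k + r))) (fps_infprod f)" .
qed

definition euler_prod :: "nat \<Rightarrow> 'a::comm_ring_1 fps" where
  "euler_prod m = fps_infprod (\<lambda>k. 1 - fps_X ^ (m * Suc k))"

lemma fps_near_one_euler: "m \<ge> 1 \<Longrightarrow> fps_near_one (\<lambda>k. 1 - fps_X ^ (m * Suc k))"
  by (rule fps_near_one_1_minus_X_power) (metis mult_1 mult_le_mono1)

lemma euler_prod_nth_0: "m \<ge> 1 \<Longrightarrow> euler_prod m $ 0 = 1"
  unfolding euler_prod_def by (rule fps_infprod_nth_0[OF fps_near_one_euler])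

lemma euler_E_eq_euler_prod: "euler_E = euler_prod 1"
proof (rule fps_ext)
  fix n
  have "fps_cong (Suc n) (euler_prod 1 :: rat fps) (\<Prod>k<Suc n. 1 - fps_X ^ (1 * Suc k))"
    unfolding euler_prod_def by (rule fps_infprod_cong[OF fps_near_one_euler]) simp_all
  also have "(\<Prod>k<Suc n. 1 - fps_X ^ (1 * Suc k) :: rat fps)
      = (\<Prod>m\<in>{1..n}. 1 - fps_X ^ m) * (1 - 1 * fps_X ^ Suc n)"
    by (simp add: prod.atLeast1_atMost_eq del: power_Suc)
  also have "fps_cong (Suc n) \<dots> ((\<Prod>m\<in>{1..n}. 1 - fps_X ^ m) * (1 - 0))"
    by (intro fps_cong_mult fps_cong_diff fps_cong_monomial) simp_all
  finally show "euler_E $ n = euler_prod 1 $ n"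
    by (simp add: euler_E_def fps_cong_iff_nth)
qed

lemma euler_Ek_eq_euler_prod:
  assumes "k \<ge> 1"
  shows "euler_Ek k = euler_prod k"
proof -
  have X0: "(fps_X ^ k :: rat fps) $ 0 = 0"
    using assms by simp
  have "euler_Ek k = fps_infprod (\<lambda>i. 1 - fps_X ^ (1 * Suc i)) oo fps_X ^ k"
    unfolding euler_Ek_def euler_E_eq_euler_prod euler_prod_def ..
  also have "\<dots> = fps_infprod (\<lambda>i. (1 - fps_X ^ (1 * Suc i)) oo fps_X ^ k)"
    by (rule fps_infprod_compose_X_power[OF fps_near_one_euler assms]) simp
  also have "(\<lambda>i. (1 - fps_X ^ (1 * Suc i) :: rat fps) oo fps_X ^ k) = (\<lambda>i. 1 - fps_X ^ (k * Suc i))"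
    by (simp add: fps_compose_sub_distrib fps_X_power_compose[OF X0] power_mult[symmetric]
        mult.commute del: power_Suc)
  finally show ?thesis
    unfolding euler_prod_def .
qed

section \<open>The finite Jacobi triple product\<close>

definition triangular :: "int \<Rightarrow> nat" where
  "triangular j = nat ((j * j + j) div 2)"

lemma of_nat_triangular: "2 * int (triangular j) = j * j + j"
proof -
  have "even (j * j + j)"
    by (metis even_add even_mult_iff)
  moreover have "j * j + j \<ge> 0"
  proof (cases "j \<ge> 0")
    case False
    then have "j * (j + 1) \<ge> 0"
      by (intro mult_nonpos_nonpos) auto
    then show ?thesis
      by (simp add: algebra_simps)
  qed simp
  ultimately show ?thesis
    unfolding triangular_def by simp
qed

lemma triangular_plus_1: "int (triangular (j + 1)) = int (triangular j) + j + 1"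
  and triangular_uminus: "int (triangular (- j)) = int (triangular j) - j"
  and triangular_add_uminus: "int (triangular j) + int (triangular (- j)) = j * j"
  using of_nat_triangular[of j] of_nat_triangular[of "j + 1"] of_nat_triangular[of "- j"]
  by (simp_all add: algebra_simps)

definition qpochhammer :: "'a::comm_ring_1 \<Rightarrow> nat \<Rightarrow> 'a" where
  "qpochhammer Q n = (\<Prod>i<n. 1 - Q ^ Suc i)"

lemma qpochhammer_0 [simp]: "qpochhammer Q 0 = 1"
  and qpochhammer_Suc: "qpochhammer Q (Suc n) = qpochhammer Q n * (1 - Q ^ Suc n)"
  by (simp_all add: qpochhammer_def)

fun qbinomial :: "'a::comm_ring_1 \<Rightarrow> nat \<Rightarrow> nat \<Rightarrow> 'a" where
  "qbinomial Q 0 k = (if k = 0 then 1 else 0)"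
| "qbinomial Q (Suc m) k = (if k = 0 then 1 else qbinomial Q m (k - 1) + Q ^ k * qbinomial Q m k)"

lemma qbinomial_0_right [simp]: "qbinomial Q m 0 = 1"
  by (cases m) auto

lemma qbinomial_eq_0: "m < k \<Longrightarrow> qbinomial Q m k = 0"
proof (induction m arbitrary: k)
  case (Suc m)
  then obtain k' where "k = Suc k'" "m < k'"
    by (cases k) auto
  then show ?case
    using Suc.IH by simp
qed simp

lemma qbinomial_qpochhammer:
  "k \<le> m \<Longrightarrow> qbinomial Q m k * qpochhammer Q k * qpochhammer Q (m - k) = qpochhammer Q m"
proof (induction m arbitrary: k)
  case (Suc m)
  let ?P = "qpochhammer Q"
  show ?case
  proof (cases k)
    case (Suc k')
    then have k'm: "k' \<le> m"
      using Suc.prems by simp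
    have IH1: "qbinomial Q m k' * ?P k' * ?P (m - k') = ?P m"
      using Suc.IH k'm by blast
    have IH2: "Q ^ Suc k' * qbinomial Q m (Suc k') * ?P (Suc k') * ?P (m - k')
        = Q ^ Suc k' * ?P m * (1 - Q ^ (m - k'))"
    proof (cases "Suc k' \<le> m")
      case True
      then have e: "m - k' = Suc (m - Suc k')"
        by simp
      have "qbinomial Q m (Suc k') * ?P (Suc k') * ?P (m - Suc k') = ?P m"
        using Suc.IH True by blast
      then show ?thesis
        unfolding e qpochhammer_Suc[of Q "m - Suc k'"]
        by (simp only: e[symmetric]) (metis (no_types, lifting) mult.assoc mult.left_commute)
    qed (use k'm in \<open>simp add: qbinomial_eq_0\<close>)
    have "qbinomial Q (Suc m) k * ?P k * ?P (Suc m - k)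
        = qbinomial Q m k' * ?P k' * ?P (m - k') * (1 - Q ^ Suc k')
          + Q ^ Suc k' * qbinomial Q m (Suc k') * ?P (Suc k') * ?P (m - k')"
      using Suc by (simp add: qpochhammer_Suc algebra_simps)
    also have "\<dots> = ?P m * (1 - Q ^ Suc k') + Q ^ Suc k' * ?P m * (1 - Q ^ (m - k'))"
      unfolding IH1 IH2 ..
    also have "\<dots> = ?P m * (1 - Q ^ Suc k' * Q ^ (m - k'))"
      by (simp add: algebra_simps)
    also have "Q ^ Suc k' * Q ^ (m - k') = Q ^ (Suc k' + (m - k'))"
      by (simp only: power_add)
    also have "Suc k' + (m - k') = Suc m"
      using k'm by simp
    also have "?P m * (1 - Q ^ Suc m) = ?P (Suc m)"
      by (simp add: qpochhammer_Suc)
    finally show ?thesis .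
  qed simp
qed simp

text \<open>The second q-Pascal rule. It is derived from the first through the product formula, which
  is why the q-Pochhammer symbols must not vanish.\<close>
lemma qbinomial_Suc_Suc':
  fixes Q :: "'a::idom"
  assumes nz: "\<And>j. qpochhammer Q j \<noteq> 0" and km: "k \<le> m"
  shows "qbinomial Q (Suc m) (Suc k) = Q ^ (m - k) * qbinomial Q m k + qbinomial Q m (Suc k)"
proof -
  let ?P = "qpochhammer Q"
  have B: "qbinomial Q m k * ?P k * ?P (m - k) = ?P m"
    using qbinomial_qpochhammer km by blast
  have C: "qbinomial Q m (Suc k) * ?P (Suc k) * ?P (m - k) = ?P m * (1 - Q ^ (m - k))"
  proof (cases "Suc k \<le> m")
    case True
    then have e: "m - k = Suc (m - Suc k)"
      by simp
    have "qbinomial Q m (Suc k) * ?P (Suc k) * ?P (m - Suc k) = ?P m"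
      using qbinomial_qpochhammer True by blast
    then show ?thesis
      unfolding e qpochhammer_Suc[of Q "m - Suc k"]
      by (simp only: e[symmetric]) (metis (no_types, lifting) mult.assoc)
  qed (use km in \<open>simp add: qbinomial_eq_0\<close>)
  have "(Q ^ (m - k) * qbinomial Q m k + qbinomial Q m (Suc k)) * ?P (Suc k) * ?P (m - k)
      = Q ^ (m - k) * (qbinomial Q m k * ?P k * ?P (m - k)) * (1 - Q ^ Suc k)
        + qbinomial Q m (Suc k) * ?P (Suc k) * ?P (m - k)"
    by (simp add: qpochhammer_Suc algebra_simps)
  also have "\<dots> = Q ^ (m - k) * ?P m * (1 - Q ^ Suc k) + ?P m * (1 - Q ^ (m - k))"
    unfolding B C ..
  also have "\<dots> = ?P m * (1 - Q ^ (m - k) * Q ^ Suc k)"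
    by (simp add: algebra_simps)
  also have "Q ^ (m - k) * Q ^ Suc k = Q ^ ((m - k) + Suc k)"
    by (simp only: power_add)
  also have "(m - k) + Suc k = Suc m"
    using km by simp
  also have "?P m * (1 - Q ^ Suc m) = ?P (Suc m)"
    by (simp add: qpochhammer_Suc)
  also have "\<dots> = qbinomial Q (Suc m) (Suc k) * ?P (Suc k) * ?P (m - k)"
    using qbinomial_qpochhammer[of "Suc k" "Suc m" Q] km by simp
  finally show ?thesis
    using nz by (simp add: mult.assoc)
qed

lemma qbinomial_add_2:
  fixes Q :: "'a::idom"
  assumes nz: "\<And>j. qpochhammer Q j \<noteq> 0" and km: "k \<le> m"
  shows "qbinomial Q (m + 2) (k + 2) = Q ^ (m - k) * qbinomial Q m k
           + (1 + Q ^ (m + 1)) * qbinomial Q m (k + 1) + Q ^ (k + 2) * qbinomial Q m (k + 2)"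
proof -
  have last: "Q ^ (k + 2) * qbinomial Q (Suc m) (Suc (Suc k))
      = Q ^ (m + 1) * qbinomial Q m (Suc k) + Q ^ (k + 2) * qbinomial Q m (Suc (Suc k))"
  proof (cases "Suc k \<le> m")
    case True
    have "(k + 2) + (m - Suc k) = m + 1"
      using True by simp
    then have "Q ^ (k + 2) * Q ^ (m - Suc k) = Q ^ (m + 1)"
      by (metis power_add)
    then show ?thesis
      unfolding qbinomial_Suc_Suc'[OF nz True] distrib_left mult.assoc[symmetric] by simp
  qed (use km in \<open>simp add: qbinomial_eq_0\<close>)
  have "qbinomial Q (m + 2) (k + 2)
      = qbinomial Q (Suc m) (Suc k) + Q ^ (k + 2) * qbinomial Q (Suc m) (Suc (Suc k))"
    by (simp add: numeral_2_eq_2)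
  also have "\<dots> = Q ^ (m - k) * qbinomial Q m k + qbinomial Q m (Suc k)
      + Q ^ (m + 1) * qbinomial Q m (Suc k) + Q ^ (k + 2) * qbinomial Q m (Suc (Suc k))"
    unfolding qbinomial_Suc_Suc'[OF nz km] last by (simp only: add.assoc)
  finally show ?thesis
    by (simp add: algebra_simps numeral_2_eq_2)
qed

definition qbinomial_int :: "'a::comm_ring_1 \<Rightarrow> nat \<Rightarrow> int \<Rightarrow> 'a" where
  "qbinomial_int Q m k = (if k < 0 then 0 else qbinomial Q m (nat k))"

lemma qbinomial_int_eq_0 [simp]:
  "k < 0 \<Longrightarrow> qbinomial_int Q m k = 0"
  "int m < k \<Longrightarrow> qbinomial_int Q m k = 0"
  by (simp_all add: qbinomial_int_def qbinomial_eq_0)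

lemma qbinomial_int_add_2:
  fixes Q :: "'a::idom"
  assumes nz: "\<And>j. qpochhammer Q j \<noteq> 0"
  shows "qbinomial_int Q (m + 2) K = Q ^ nat (int m + 2 - K) * qbinomial_int Q m (K - 2)
           + (1 + Q ^ (m + 1)) * qbinomial_int Q m (K - 1) + Q ^ nat K * qbinomial_int Q m K"
proof -
  consider "K < 0" | "K = 0" | "K = 1" | "K \<ge> 2" "K \<le> int m + 2" | "K > int m + 2"
    by linarith
  then show ?thesis
  proof cases
    case 2
    then show ?thesis
      by (simp add: qbinomial_int_def)
  next
    case 3
    then show ?thesis
      using qbinomial_Suc_Suc'[OF nz, of 0 m] by (simp add: qbinomial_int_def algebra_simps numeral_2_eq_2)
  next
    case 4
    define k where "k = nat (K - 2)"
    have K: "K = int k + 2" and km: "k \<le> m"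
      using 4 by (auto simp: k_def)
    have "nat (int m + 2 - K) = m - k" "nat K = k + 2" "nat (K - 1) = k + 1" "nat (K - 2) = k"
      using K km by simp_all
    then show ?thesis
      using K qbinomial_add_2[OF nz km] by (simp add: qbinomial_int_def)
  qed simp_all
qed

definition jtp_monomial :: "'a::comm_ring_1 \<Rightarrow> 'a \<Rightarrow> int \<Rightarrow> 'a" where
  "jtp_monomial a b j = a ^ triangular j * b ^ triangular (- j)"

lemma jtp_monomial_swap: "jtp_monomial b a j = jtp_monomial a b (- j)"
  by (simp add: jtp_monomial_def mult.commute)

lemma jtp_monomial_shift_a:
  assumes "j \<le> int N"
  shows "a * (a * b) ^ N * jtp_monomial a b j = (a * b) ^ nat (int N - j) * jtp_monomial a b (j + 1)"
proof -
  have h: "int (nat (int N - j)) = int N - j"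
    using assms by simp
  have "int (triangular (j + 1) + nat (int N - j)) = int (Suc (triangular j + N))"
    using triangular_plus_1[of j] h by simp
  then have e1: "triangular (j + 1) + nat (int N - j) = Suc (triangular j + N)"
    by (simp only: of_nat_eq_iff)
  have "int (triangular (- (j + 1)) + nat (int N - j)) = int (triangular (- j) + N)"
    using triangular_uminus[of "j + 1"] triangular_plus_1[of j] triangular_uminus[of j] h by simp
  then have e2: "triangular (- (j + 1)) + nat (int N - j) = triangular (- j) + N"
    by (simp only: of_nat_eq_iff)
  have "a * (a * b) ^ N * jtp_monomial a b j = a ^ Suc (triangular j + N) * b ^ (triangular (- j) + N)"
    unfolding jtp_monomial_def power_mult_distrib by (simp add: power_add mult_ac)
  also have "\<dots> = (a * b) ^ nat (int N - j) * jtp_monomial a b (j + 1)"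
    unfolding e1[symmetric] e2[symmetric] jtp_monomial_def power_mult_distrib by (simp add: power_add mult_ac)
  finally show ?thesis .
qed

lemma jtp_monomial_shift_b:
  assumes "- int N \<le> j"
  shows "b * (a * b) ^ N * jtp_monomial a b j = (a * b) ^ nat (int N + j) * jtp_monomial a b (j - 1)"
proof -
  have "b * (b * a) ^ N * jtp_monomial b a (- j) = (b * a) ^ nat (int N - - j) * jtp_monomial b a (- j + 1)"
    using assms by (intro jtp_monomial_shift_a) simp
  moreover have "- j + 1 = - (j - 1)" "int N - - j = int N + j" "b * a = a * b"
    by (simp_all add: mult.commute)
  ultimately show ?thesis
    by (simp only: jtp_monomial_swap[of b a] minus_minus)
qed

lemma sum_int_shift: "(\<Sum>j\<in>{lo..hi::int}. F (j + c)) = (\<Sum>i\<in>{lo + c..hi + c}. F i)"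
proof -
  have "(\<Sum>i\<in>{lo + c..hi + c}. F i) = (\<Sum>i\<in>(\<lambda>j. j + c) ` {lo..hi}. F i)"
    by simp
  also have "\<dots> = (\<Sum>j\<in>{lo..hi}. F (j + c))"
    by (subst sum.reindex) (auto simp: inj_on_def)
  finally show ?thesis
    by simp
qed

lemma sum_int_extend:
  assumes "lo' \<le> lo" "hi \<le> hi'" "\<And>j. j < lo \<Longrightarrow> F j = 0" "\<And>j. j > hi \<Longrightarrow> F j = 0"
  shows "(\<Sum>j\<in>{lo'..hi'::int}. F j) = (\<Sum>j\<in>{lo..hi}. F j)"
  by (rule sum.mono_neutral_right) (use assms in auto)

definition jtp_partial :: "'a::comm_ring_1 \<Rightarrow> 'a \<Rightarrow> nat \<Rightarrow> 'a" where
  "jtp_partial a b N =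
     (\<Sum>j\<in>{- int N..int N}. qbinomial_int (a * b) (2 * N) (int N + j) * jtp_monomial a b j)"

lemma jtp_partial_mult_a:
  "jtp_partial a b N * (a * (a * b) ^ N) = (\<Sum>j\<in>{- int N - 1..int N + 1}.
     qbinomial_int (a * b) (2 * N) (int N + j - 1) * (a * b) ^ nat (int N + 1 - j) * jtp_monomial a b j)"
  (is "_ = (\<Sum>j\<in>_. ?F j)")
proof -
  have "jtp_partial a b N * (a * (a * b) ^ N) = (\<Sum>j\<in>{- int N..int N}. ?F (j + 1))"
    unfolding jtp_partial_def sum_distrib_right
  proof (intro sum.cong refl)
    fix j assume "j \<in> {- int N..int N}"
    then have shift: "a * (a * b) ^ N * jtp_monomial a b j = (a * b) ^ nat (int N - j) * jtp_monomial a b (j + 1)"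
      by (intro jtp_monomial_shift_a) simp
    have "qbinomial_int (a * b) (2 * N) (int N + j) * jtp_monomial a b j * (a * (a * b) ^ N)
        = qbinomial_int (a * b) (2 * N) (int N + j) * (a * (a * b) ^ N * jtp_monomial a b j)"
      by (simp add: mult_ac)
    also have "\<dots> = ?F (j + 1)"
      unfolding shift by (simp add: mult.assoc)
    finally show "qbinomial_int (a * b) (2 * N) (int N + j) * jtp_monomial a b j * (a * (a * b) ^ N)
        = ?F (j + 1)" .
  qed
  also have "\<dots> = (\<Sum>j\<in>{- int N + 1..int N + 1}. ?F j)"
    by (rule sum_int_shift)
  also have "\<dots> = (\<Sum>j\<in>{- int N - 1..int N + 1}. ?F j)"
    by (rule sum_int_extend[symmetric]) auto
  finally show ?thesis .
qed

lemma jtp_partial_mult_b: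
  "jtp_partial a b N * (b * (a * b) ^ N) = (\<Sum>j\<in>{- int N - 1..int N + 1}.
     qbinomial_int (a * b) (2 * N) (int N + j + 1) * (a * b) ^ nat (int N + 1 + j) * jtp_monomial a b j)"
  (is "_ = (\<Sum>j\<in>_. ?F j)")
proof -
  have "jtp_partial a b N * (b * (a * b) ^ N) = (\<Sum>j\<in>{- int N..int N}. ?F (j + -1))"
    unfolding jtp_partial_def sum_distrib_right
  proof (intro sum.cong refl)
    fix j assume "j \<in> {- int N..int N}"
    then have shift: "b * (a * b) ^ N * jtp_monomial a b j = (a * b) ^ nat (int N + j) * jtp_monomial a b (j - 1)"
      by (intro jtp_monomial_shift_b) simp
    have "qbinomial_int (a * b) (2 * N) (int N + j) * jtp_monomial a b j * (b * (a * b) ^ N)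
        = qbinomial_int (a * b) (2 * N) (int N + j) * (b * (a * b) ^ N * jtp_monomial a b j)"
      by (simp add: mult_ac)
    also have "\<dots> = ?F (j + -1)"
      unfolding shift by (simp add: mult.assoc)
    finally show "qbinomial_int (a * b) (2 * N) (int N + j) * jtp_monomial a b j * (b * (a * b) ^ N)
        = ?F (j + -1)" .
  qed
  also have "\<dots> = (\<Sum>j\<in>{- int N + -1..int N + -1}. ?F j)"
    by (rule sum_int_shift)
  also have "\<dots> = (\<Sum>j\<in>{- int N - 1..int N + 1}. ?F j)"
    by (rule sum_int_extend[symmetric]) auto
  finally show ?thesis .
qed

lemma qbinomial_int_jtp_step:
  fixes Q :: "'a::idom"
  assumes "\<And>j. qpochhammer Q j \<noteq> 0"
  shows "qbinomial_int Q (2 * N) (int N + j) * (1 + Q ^ (2 * N + 1))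
      + qbinomial_int Q (2 * N) (int N + j - 1) * Q ^ nat (int N + 1 - j)
      + qbinomial_int Q (2 * N) (int N + j + 1) * Q ^ nat (int N + 1 + j)
    = qbinomial_int Q (2 * Suc N) (int (Suc N) + j)"
proof -
  have "nat (int (2 * N) + 2 - (int N + 1 + j)) = nat (int N + 1 - j)"
    by simp
  then show ?thesis
    using qbinomial_int_add_2[OF assms, of "2 * N" "int N + 1 + j"] by (simp add: algebra_simps)
qed

lemma jtp_partial_Suc:
  fixes a b :: "'a::idom"
  assumes nz: "\<And>j. qpochhammer (a * b) j \<noteq> 0"
  shows "jtp_partial a b (Suc N) = jtp_partial a b N * ((1 + a * (a * b) ^ N) * (1 + b * (a * b) ^ N))"
proof -
  let ?Q = "a * b" and ?I = "{- int N - 1..int N + 1}"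
  let ?G = "qbinomial_int ?Q (2 * N)" and ?A = "jtp_monomial a b"
  have "a * ?Q ^ N * (b * ?Q ^ N) = ?Q * (?Q ^ N * ?Q ^ N)"
    by (simp add: mult_ac)
  also have "\<dots> = ?Q ^ (2 * N + 1)"
    by (simp add: mult_2 power_add)
  finally have expand: "(1 + a * ?Q ^ N) * (1 + b * ?Q ^ N) = (1 + ?Q ^ (2 * N + 1)) + a * ?Q ^ N + b * ?Q ^ N"
    by (simp add: algebra_simps)
  have base: "jtp_partial a b N * (1 + ?Q ^ (2 * N + 1))
      = (\<Sum>j\<in>?I. ?G (int N + j) * (1 + ?Q ^ (2 * N + 1)) * ?A j)"
    unfolding jtp_partial_def sum_distrib_right
    by (subst sum_int_extend[of _ "- int N" "int N"]) (auto simp: mult_ac)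
  have pascal: "?G (int N + j) * (1 + ?Q ^ (2 * N + 1)) * ?A j
      + ?G (int N + j - 1) * ?Q ^ nat (int N + 1 - j) * ?A j
      + ?G (int N + j + 1) * ?Q ^ nat (int N + 1 + j) * ?A j
      = qbinomial_int ?Q (2 * Suc N) (int (Suc N) + j) * ?A j" for j
    unfolding qbinomial_int_jtp_step[OF nz, symmetric] by (simp add: algebra_simps)
  have "jtp_partial a b N * ((1 + a * ?Q ^ N) * (1 + b * ?Q ^ N))
      = jtp_partial a b N * (1 + ?Q ^ (2 * N + 1)) + jtp_partial a b N * (a * ?Q ^ N)
        + jtp_partial a b N * (b * ?Q ^ N)"
    unfolding expand by (simp add: algebra_simps)
  also have "\<dots> = (\<Sum>j\<in>?I. qbinomial_int ?Q (2 * Suc N) (int (Suc N) + j) * ?A j)"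
    unfolding base jtp_partial_mult_a jtp_partial_mult_b pascal[symmetric]
    by (simp add: sum.distrib)
  also have "\<dots> = jtp_partial a b (Suc N)"
    unfolding jtp_partial_def by (intro sum.cong) auto
  finally show ?thesis
    by simp
qed

theorem finite_jacobi_triple_product:
  fixes a b :: "'a::idom"
  assumes "\<And>j. qpochhammer (a * b) j \<noteq> 0"
  shows "(\<Prod>k<N. (1 + a * (a * b) ^ k) * (1 + b * (a * b) ^ k)) = jtp_partial a b N"
proof (induction N)
  case 0
  then show ?case
    by (simp add: jtp_partial_def jtp_monomial_def triangular_def qbinomial_int_def)
next
  case (Suc N)
  then show ?case
    using jtp_partial_Suc[OF assms, of N] by simp
qed

section \<open>The Jacobi triple product\<close>

definition theta_exponent :: "nat \<Rightarrow> nat \<Rightarrow> int \<Rightarrow> nat" where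
  "theta_exponent \<alpha> \<beta> j = \<alpha> * triangular j + \<beta> * triangular (- j)"

definition theta_term :: "nat \<Rightarrow> nat \<Rightarrow> 'a::comm_ring_1 \<Rightarrow> int \<Rightarrow> 'a fps" where
  "theta_term \<alpha> \<beta> c j = fps_const (c ^ nat (j * j)) * fps_X ^ theta_exponent \<alpha> \<beta> j"

text \<open>\<open>theta \<alpha> \<beta> c = \<Sum>\<^sub>j c^(j\<^sup>2) q^(\<alpha> j(j+1)/2 + \<beta> j(j-1)/2)\<close>; for \<open>\<alpha>, \<beta> \<ge> 1\<close> the terms with
  \<open>|j| > n\<close> do not contribute to the coefficient of \<open>q^n\<close>.\<close>
definition theta :: "nat \<Rightarrow> nat \<Rightarrow> 'a::comm_ring_1 \<Rightarrow> 'a fps" where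
  "theta \<alpha> \<beta> c = Abs_fps (\<lambda>n. (\<Sum>j\<in>{- int n..int n}. theta_term \<alpha> \<beta> c j) $ n)"

lemma jtp_monomial_eq_theta_term:
  "jtp_monomial (fps_const c * fps_X ^ \<alpha>) (fps_const c * fps_X ^ \<beta>) j = theta_term \<alpha> \<beta> c j"
proof -
  have "jtp_monomial (fps_const c * fps_X ^ \<alpha>) (fps_const c * fps_X ^ \<beta>) j
      = fps_const (c ^ (triangular j + triangular (- j))) * fps_X ^ theta_exponent \<alpha> \<beta> j"
    unfolding jtp_monomial_def theta_exponent_def
    by (simp add: power_mult_distrib power_add power_mult fps_const_power mult_ac)
  also have "triangular j + triangular (- j) = nat (j * j)"
    using triangular_add_uminus[of j] by linarith
  finally show ?thesis
    unfolding theta_term_def .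
qed

lemma theta_term_cong_0:
  assumes "\<alpha> \<ge> 1" "\<beta> \<ge> 1" "n \<le> nat \<bar>j\<bar>"
  shows "fps_cong n (theta_term \<alpha> \<beta> c j) 0"
proof -
  have "\<bar>j\<bar> \<le> j * j"
  proof (cases "j = 0")
    case False
    then have "\<bar>j\<bar> * 1 \<le> \<bar>j\<bar> * \<bar>j\<bar>"
      by (intro mult_left_mono) auto
    then show ?thesis
      by (simp add: abs_mult[symmetric])
  qed simp
  then have "nat \<bar>j\<bar> \<le> triangular j + triangular (- j)"
    using triangular_add_uminus[of j] by linarith
  also have "\<dots> \<le> theta_exponent \<alpha> \<beta> j"
    unfolding theta_exponent_def using assms(1,2) by (intro add_mono) auto
  finally show ?thesis
    unfolding theta_term_def using assms(3) by (intro fps_cong_monomial) simp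
qed

lemma theta_cong_partial_sum:
  assumes "\<alpha> \<ge> 1" "\<beta> \<ge> 1" "n \<le> N"
  shows "fps_cong n (theta \<alpha> \<beta> c) (\<Sum>j\<in>{- int N..int N}. theta_term \<alpha> \<beta> c j)"
  unfolding fps_cong_iff_nth
proof (intro allI impI)
  fix i assume "i < n"
  let ?T = "theta_term \<alpha> \<beta> c"
  have "fps_cong (Suc i) (\<Sum>j\<in>{- int N..int N}. ?T j) (\<Sum>j\<in>{- int N..int N}. if \<bar>j\<bar> \<le> int i then ?T j else 0)"
    by (intro fps_cong_sum) (auto intro: theta_term_cong_0[OF assms(1,2)])
  also have "(\<Sum>j\<in>{- int N..int N}. if \<bar>j\<bar> \<le> int i then ?T j else 0) = (\<Sum>j\<in>{- int i..int i}. ?T j)"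
  proof -
    have "(\<Sum>j\<in>{- int N..int N}. if \<bar>j\<bar> \<le> int i then ?T j else 0)
        = (\<Sum>j\<in>{- int N..int N} \<inter> {j. \<bar>j\<bar> \<le> int i}. ?T j)"
      by (simp add: sum.inter_restrict)
    also have "{- int N..int N} \<inter> {j. \<bar>j\<bar> \<le> int i} = {- int i..int i}"
      using \<open>i < n\<close> assms(3) by auto
    finally show ?thesis .
  qed
  finally show "theta \<alpha> \<beta> c $ i = (\<Sum>j\<in>{- int N..int N}. ?T j) $ i"
    unfolding theta_def fps_cong_iff_nth by simp
qed

lemma qpochhammer_X_power: "qpochhammer (fps_X ^ m) r = (\<Prod>i<r. 1 - fps_X ^ (m * Suc i))"
  unfolding qpochhammer_def by (simp only: power_mult)

lemma qpochhammer_X_power_neq_0: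
  assumes "m \<ge> 1"
  shows "qpochhammer (fps_X ^ m :: 'a::idom fps) r \<noteq> 0"
proof -
  have "qpochhammer (fps_X ^ m :: 'a fps) r $ 0 = 1"
    using assms by (induction r) (auto simp: qpochhammer_Suc)
  then show ?thesis
    by (metis fps_zero_nth zero_neq_one)
qed

lemma euler_prod_cong_qpochhammer:
  "m \<ge> 1 \<Longrightarrow> n \<le> r \<Longrightarrow> fps_cong n (euler_prod m) (qpochhammer (fps_X ^ m) r)"
  unfolding euler_prod_def qpochhammer_X_power by (rule fps_infprod_cong[OF fps_near_one_euler])

lemma qbinomial_X_power_cong_inverse:
  assumes m: "m \<ge> 1" and "n \<le> k" "n \<le> M - k" "k \<le> M"
  shows "fps_cong n (qbinomial (fps_X ^ m) M k) (inverse (euler_prod m :: 'a::field fps))"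
proof -
  let ?Q = "fps_X ^ m :: 'a fps" and ?E = "euler_prod m :: 'a fps"
  have E: "?E * inverse ?E = 1"
    using euler_prod_nth_0[OF m, where 'a = 'a] by (simp add: inverse_mult_eq_1')
  have "fps_cong n (qbinomial ?Q M k * ?E * ?E) (qbinomial ?Q M k * qpochhammer ?Q k * qpochhammer ?Q (M - k))"
    using euler_prod_cong_qpochhammer[OF m] assms(2,3) by (meson fps_cong_mult fps_cong_refl)
  also have "\<dots> = qpochhammer ?Q M"
    using qbinomial_qpochhammer assms(4) by blast
  also have "fps_cong n \<dots> ?E"
    using fps_cong_sym[OF euler_prod_cong_qpochhammer[OF m, of n M]] assms by simp
  finally have "fps_cong n (qbinomial ?Q M k * ?E * ?E * (inverse ?E * inverse ?E))
      (?E * (inverse ?E * inverse ?E))"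
    by (rule fps_cong_mult[OF _ fps_cong_refl])
  moreover have "qbinomial ?Q M k * ?E * ?E * (inverse ?E * inverse ?E)
      = qbinomial ?Q M k * (?E * inverse ?E) * (?E * inverse ?E)"
    by (simp only: mult_ac)
  moreover have "?E * (inverse ?E * inverse ?E) = ?E * inverse ?E * inverse ?E"
    by (simp only: mult.assoc)
  ultimately show ?thesis
    unfolding E by simp
qed

lemma fps_const_minus_1 [simp]: "fps_const (-1 :: 'a::comm_ring_1) = -1"
  by (simp flip: fps_const_neg)

definition ap_prod :: "'a::comm_ring_1 \<Rightarrow> nat \<Rightarrow> nat \<Rightarrow> 'a fps" where
  "ap_prod c r m = fps_infprod (\<lambda>k. 1 + fps_const c * fps_X ^ (r + m * k))"

lemma fps_near_one_ap_prod:
  assumes "r \<ge> 1" "m \<ge> 1"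
  shows "fps_near_one (\<lambda>k. 1 + fps_const c * fps_X ^ (r + m * k))"
proof (rule fps_near_one_monomials)
  fix k
  have "k \<le> m * k"
    using assms(2) by simp
  then show "Suc k \<le> r + m * k"
    using assms(1) by linarith
qed

lemma fps_const_X_power_mult:
  fixes c :: "'a::field"
  assumes "c * c = 1"
  shows "fps_const c * fps_X ^ \<alpha> * (fps_const c * fps_X ^ \<beta>) = (fps_X ^ (\<alpha> + \<beta>) :: 'a fps)"
  using assms by (simp add: power_add mult_ac flip: fps_const_mult)

lemma jtp_partial_cong_theta:
  fixes c :: "'a::field"
  assumes a1: "\<alpha> \<ge> 1" and b1: "\<beta> \<ge> 1" and cc: "c * c = 1" and N: "2 * n \<le> N"
  shows "fps_cong n (jtp_partial (fps_const c * fps_X ^ \<alpha>) (fps_const c * fps_X ^ \<beta>) N)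
           (inverse (euler_prod (\<alpha> + \<beta>)) * theta \<alpha> \<beta> c)"
proof -
  let ?m = "\<alpha> + \<beta>" let ?I = "{- int N..int N}"
  let ?E' = "inverse (euler_prod ?m) :: 'a fps" and ?T = "theta_term \<alpha> \<beta> c"
  have "fps_cong n (qbinomial_int (fps_X ^ ?m) (2 * N) (int N + j) * ?T j) (?E' * ?T j)"
    if j: "j \<in> ?I" for j
  proof (cases "n \<le> nat \<bar>j\<bar>")
    case True
    then have "fps_cong n (?T j) 0"
      by (rule theta_term_cong_0[OF a1 b1])
    then have "fps_cong n (G * ?T j) (G * 0)" for G
      by (rule fps_cong_mult[OF fps_cong_refl])
    then have "fps_cong n (qbinomial_int (fps_X ^ ?m) (2 * N) (int N + j) * ?T j) 0"
      "fps_cong n (?E' * ?T j) 0"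
      by simp_all
    then show ?thesis
      by (simp add: fps_cong_iff_nth)
  next
    case False
    then have "fps_cong n (qbinomial (fps_X ^ ?m) (2 * N) (nat (int N + j))) ?E'"
      using N j a1 by (intro qbinomial_X_power_cong_inverse) auto
    moreover have "int N + j \<ge> 0"
      using j by simp
    ultimately show ?thesis
      by (simp add: qbinomial_int_def fps_cong_mult)
  qed
  then have sum: "fps_cong n (jtp_partial (fps_const c * fps_X ^ \<alpha>) (fps_const c * fps_X ^ \<beta>) N)
      (\<Sum>j\<in>?I. ?E' * ?T j)"
    unfolding jtp_partial_def fps_const_X_power_mult[OF cc] jtp_monomial_eq_theta_term
    by (rule fps_cong_sum)
  have "fps_cong n (theta \<alpha> \<beta> c) (\<Sum>j\<in>?I. ?T j)"
    using N by (intro theta_cong_partial_sum[OF a1 b1]) simp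
  then have "fps_cong n (?E' * theta \<alpha> \<beta> c) (\<Sum>j\<in>?I. ?E' * ?T j)"
    unfolding sum_distrib_left[symmetric] by (rule fps_cong_mult[OF fps_cong_refl])
  from sum fps_cong_sym[OF this] show ?thesis
    by (rule fps_cong_trans)
qed

theorem jacobi_triple_product:
  fixes c :: "'a::field"
  assumes a1: "\<alpha> \<ge> 1" and b1: "\<beta> \<ge> 1" and cc: "c * c = 1"
  shows "theta \<alpha> \<beta> c = ap_prod c \<alpha> (\<alpha> + \<beta>) * ap_prod c \<beta> (\<alpha> + \<beta>) * euler_prod (\<alpha> + \<beta>)"
proof -
  let ?m = "\<alpha> + \<beta>"
  let ?a = "fps_const c * fps_X ^ \<alpha> :: 'a fps" and ?b = "fps_const c * fps_X ^ \<beta> :: 'a fps"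
  let ?f = "\<lambda>k. 1 + fps_const c * fps_X ^ (\<alpha> + ?m * k) :: 'a fps"
  let ?g = "\<lambda>k. 1 + fps_const c * fps_X ^ (\<beta> + ?m * k) :: 'a fps"
  note ab = fps_const_X_power_mult[OF cc, of \<alpha> \<beta>]
  have f: "?f k = 1 + ?a * (?a * ?b) ^ k" and g: "?g k = 1 + ?b * (?a * ?b) ^ k" for k
    unfolding ab by (simp_all add: power_mult power_add mult.assoc)
  have fg: "?f k * ?g k = (1 + ?a * (?a * ?b) ^ k) * (1 + ?b * (?a * ?b) ^ k)" for k
    by (simp only: f g)
  have m1: "?m \<ge> 1"
    using a1 by simp
  have E: "inverse (euler_prod ?m) * euler_prod ?m = (1 :: 'a fps)"
    using euler_prod_nth_0[OF m1, where 'a = 'a] by (simp add: inverse_mult_eq_1)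
  have "ap_prod c \<alpha> ?m * ap_prod c \<beta> ?m = inverse (euler_prod ?m) * theta \<alpha> \<beta> c"
  proof (rule fps_eq_by_cong)
    fix n
    have "fps_cong n (ap_prod c \<alpha> ?m * ap_prod c \<beta> ?m) ((\<Prod>k<2 * n. ?f k) * (\<Prod>k<2 * n. ?g k))"
      unfolding ap_prod_def using a1 b1 m1
      by (intro fps_cong_mult fps_infprod_cong fps_near_one_ap_prod) auto
    also have "(\<Prod>k<2 * n. ?f k) * (\<Prod>k<2 * n. ?g k) = jtp_partial ?a ?b (2 * n)"
      unfolding prod.distrib[symmetric] fg
      by (rule finite_jacobi_triple_product) (simp add: ab qpochhammer_X_power_neq_0[OF m1])
    also have "fps_cong n \<dots> (inverse (euler_prod ?m) * theta \<alpha> \<beta> c)"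
      by (rule jtp_partial_cong_theta[OF a1 b1 cc order.refl])
    finally show "fps_cong n (ap_prod c \<alpha> ?m * ap_prod c \<beta> ?m)
        (inverse (euler_prod ?m) * theta \<alpha> \<beta> c)" .
  qed
  then have "ap_prod c \<alpha> ?m * ap_prod c \<beta> ?m * euler_prod ?m
      = theta \<alpha> \<beta> c * (inverse (euler_prod ?m) * euler_prod ?m)"
    by (simp add: mult_ac)
  then show ?thesis
    unfolding E by simp
qed

lemma euler_prod_eq_ap_prod: "k \<ge> 1 \<Longrightarrow> euler_prod k = ap_prod (-1) k k"
  unfolding euler_prod_def ap_prod_def by (simp add: algebra_simps)

lemma ap_prod_residue_classes:
  assumes "r \<ge> 1" "m \<ge> 1" "t > 0"
  shows "ap_prod c r m = (\<Prod>i<t. ap_prod c (r + m * i) (t * m))"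
proof -
  have "ap_prod c r m = (\<Prod>i<t. fps_infprod (\<lambda>k. 1 + fps_const c * fps_X ^ (r + m * (t * k + i))))"
    unfolding ap_prod_def by (rule fps_infprod_residue_classes[OF fps_near_one_ap_prod[OF assms(1,2)] assms(3)])
  also have "\<dots> = (\<Prod>i<t. ap_prod c (r + m * i) (t * m))"
    unfolding ap_prod_def by (simp add: algebra_simps)
  finally show ?thesis .
qed

lemma ap_prod_residue_classes_2:
  "r \<ge> 1 \<Longrightarrow> m \<ge> 1 \<Longrightarrow> ap_prod c r m = ap_prod c r (2 * m) * ap_prod c (r + m) (2 * m)"
  using ap_prod_residue_classes[of r m 2 c] by (simp add: numeral_2_eq_2)

lemma ap_prod_residue_classes_3:
  "r \<ge> 1 \<Longrightarrow> m \<ge> 1 \<Longrightarrow>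
     ap_prod c r m = ap_prod c r (3 * m) * ap_prod c (r + m) (3 * m) * ap_prod c (r + 2 * m) (3 * m)"
  using ap_prod_residue_classes[of r m 3 c] by (simp add: numeral_3_eq_3 mult_ac mult_2_right)

lemma ap_prod_plus_minus:
  assumes "r \<ge> 1" "m \<ge> 1"
  shows "ap_prod 1 r m * ap_prod (-1) r m = ap_prod (-1) (2 * r) (2 * m)"
proof -
  have "ap_prod 1 r m * ap_prod (-1) r m = fps_infprod (\<lambda>k. (1 + fps_const 1 * fps_X ^ (r + m * k))
      * (1 + fps_const (-1) * fps_X ^ (r + m * k)))"
    unfolding ap_prod_def by (rule fps_infprod_mult[symmetric]) (rule fps_near_one_ap_prod[OF assms])+
  also have "(\<lambda>k. (1 + fps_const 1 * fps_X ^ (r + m * k)) * (1 + fps_const (-1) * fps_X ^ (r + m * k)))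
      = (\<lambda>k. 1 + fps_const (-1) * fps_X ^ (2 * r + 2 * m * k) :: 'a fps)"
  proof
    fix k
    have "fps_X ^ (r + m * k) * fps_X ^ (r + m * k) = (fps_X ^ (2 * r + 2 * m * k) :: 'a fps)"
      by (simp add: power_add[symmetric] algebra_simps)
    then show "(1 + fps_const 1 * fps_X ^ (r + m * k)) * (1 + fps_const (-1) * fps_X ^ (r + m * k))
        = (1 + fps_const (-1) * fps_X ^ (2 * r + 2 * m * k) :: 'a fps)"
      by (simp add: algebra_simps)
  qed
  finally show ?thesis
    unfolding ap_prod_def .
qed

lemma euler_prod_split:
  assumes "s \<ge> 1"
  shows "euler_prod s = ap_prod (-1) s (2 * s) * euler_prod (2 * s)"
proof -
  have "euler_prod s = ap_prod (-1) s s"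
    by (rule euler_prod_eq_ap_prod[OF assms])
  also have "\<dots> = ap_prod (-1) s (2 * s) * ap_prod (-1) (2 * s) (2 * s)"
    using ap_prod_residue_classes_2[OF assms assms] by (simp add: mult_2)
  also have "ap_prod (-1) (2 * s) (2 * s) = euler_prod (2 * s)"
    by (rule euler_prod_eq_ap_prod[symmetric]) (use assms in simp)
  finally show ?thesis .
qed

text \<open>In Ramanujan's notation \<open>theta s s (-1) = \<phi>(-q\<^sup>s)\<close> and \<open>theta s (3 s) 1 = \<psi>(q\<^sup>s)\<close>. Each of the
  following eta-quotient forms is the triple product with its factors regrouped by residue classes.\<close>
lemma theta_phi_eta_quotient:
  assumes "s \<ge> 1"
  shows "theta s s (-1 :: 'a::field) * euler_prod (2 * s) = euler_prod s ^ 2"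
proof -
  have t: "theta s s (-1 :: 'a) = ap_prod (-1) s (2 * s) * ap_prod (-1) s (2 * s) * euler_prod (2 * s)"
    using jacobi_triple_product[of s s "-1"] assms by (simp add: mult_2)
  show ?thesis
    unfolding t euler_prod_split[OF assms] by (simp add: power2_eq_square mult_ac)
qed

lemma theta_psi_eta_quotient:
  assumes "s \<ge> 1"
  shows "theta s (3 * s) (1 :: 'a::field) * euler_prod s = euler_prod (2 * s) ^ 2"
proof -
  have t: "theta s (3 * s) (1 :: 'a) = ap_prod 1 s (4 * s) * ap_prod 1 (3 * s) (4 * s) * euler_prod (4 * s)"
    using jacobi_triple_product[of s "3 * s" 1] assms by simp
  have sp: "ap_prod (1 :: 'a) s (2 * s) = ap_prod 1 s (4 * s) * ap_prod 1 (3 * s) (4 * s)"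
    using ap_prod_residue_classes_2[of s "2 * s" 1] assms by simp
  have pm: "ap_prod 1 s (2 * s) * ap_prod (-1) s (2 * s) = (ap_prod (-1) (2 * s) (4 * s) :: 'a fps)"
    using ap_prod_plus_minus[of s "2 * s"] assms by simp
  have e2: "euler_prod (2 * s) = (ap_prod (-1) (2 * s) (4 * s) * euler_prod (4 * s) :: 'a fps)"
    using euler_prod_split[of "2 * s"] assms by simp
  have "theta s (3 * s) (1 :: 'a) * euler_prod s
      = (ap_prod 1 s (2 * s) * ap_prod (-1) s (2 * s)) * euler_prod (4 * s) * euler_prod (2 * s)"
    unfolding t euler_prod_split[OF assms] sp by (simp add: mult_ac)
  also have "\<dots> = euler_prod (2 * s) ^ 2"
    unfolding pm by (simp add: e2[symmetric] power2_eq_square)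
  finally show ?thesis .
qed

lemma theta_s_5s_eta_quotient:
  assumes "s \<ge> 1"
  shows "theta s (5 * s) (-1 :: 'a::field) * euler_prod (2 * s) * euler_prod (3 * s)
           = euler_prod s * euler_prod (6 * s) ^ 2"
proof -
  have t: "theta s (5 * s) (-1 :: 'a) = ap_prod (-1) s (6 * s) * ap_prod (-1) (5 * s) (6 * s) * euler_prod (6 * s)"
    using jacobi_triple_product[of s "5 * s" "-1"] assms by simp
  have sp: "ap_prod (-1 :: 'a) s (2 * s)
      = ap_prod (-1) s (6 * s) * ap_prod (-1) (3 * s) (6 * s) * ap_prod (-1) (5 * s) (6 * s)"
    using ap_prod_residue_classes_3[of s "2 * s" "-1"] assms by simp
  have e3: "euler_prod (3 * s) = (ap_prod (-1) (3 * s) (6 * s) * euler_prod (6 * s) :: 'a fps)"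
    using euler_prod_split[of "3 * s"] assms by simp
  have "theta s (5 * s) (-1 :: 'a) * euler_prod (2 * s) * euler_prod (3 * s)
      = (ap_prod (-1) s (6 * s) * ap_prod (-1) (3 * s) (6 * s) * ap_prod (-1) (5 * s) (6 * s))
        * euler_prod (2 * s) * euler_prod (6 * s) ^ 2"
    unfolding t e3 by (simp add: mult_ac power2_eq_square)
  also have "\<dots> = euler_prod s * euler_prod (6 * s) ^ 2"
    unfolding sp[symmetric] euler_prod_split[OF assms] ..
  finally show ?thesis .
qed

lemma theta_s_2s_eta_quotient:
  assumes "s \<ge> 1"
  shows "theta s (2 * s) (1 :: 'a::field) * euler_prod s * euler_prod (6 * s)
           = euler_prod (2 * s) * euler_prod (3 * s) ^ 2"
proof -
  have t: "theta s (2 * s) (1 :: 'a) = ap_prod 1 s (3 * s) * ap_prod 1 (2 * s) (3 * s) * euler_prod (3 * s)"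
    using jacobi_triple_product[of s "2 * s" 1] assms by simp
  have sp: "ap_prod (1 :: 'a) s s = ap_prod 1 s (3 * s) * ap_prod 1 (2 * s) (3 * s) * ap_prod 1 (3 * s) (3 * s)"
  proof -
    have e: "s + s = 2 * s" "s + 2 * s = 3 * s"
      by simp_all
    show ?thesis
      using ap_prod_residue_classes_3[of s s 1] assms unfolding e by simp
  qed
  have pm1: "ap_prod 1 s s * ap_prod (-1) s s = (euler_prod (2 * s) :: 'a fps)"
    using ap_prod_plus_minus[of s s] assms euler_prod_eq_ap_prod[of "2 * s", where 'a = 'a] by simp
  have pm3: "ap_prod 1 (3 * s) (3 * s) * ap_prod (-1) (3 * s) (3 * s) = (euler_prod (6 * s) :: 'a fps)"
    using ap_prod_plus_minus[of "3 * s" "3 * s"] assms euler_prod_eq_ap_prod[of "6 * s", where 'a = 'a] by simp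
  have e3: "ap_prod (-1) (3 * s) (3 * s) = (euler_prod (3 * s) :: 'a fps)"
    by (rule euler_prod_eq_ap_prod[symmetric]) (use assms in simp)
  have "theta s (2 * s) (1 :: 'a) * euler_prod s * euler_prod (6 * s)
      = (ap_prod 1 s (3 * s) * ap_prod 1 (2 * s) (3 * s) * ap_prod 1 (3 * s) (3 * s))
        * ap_prod (-1) s s * euler_prod (3 * s) * ap_prod (-1) (3 * s) (3 * s)"
    unfolding t euler_prod_eq_ap_prod[OF assms] pm3[symmetric] by (simp add: mult_ac)
  also have "\<dots> = euler_prod (2 * s) * euler_prod (3 * s) ^ 2"
    unfolding sp[symmetric] e3 by (simp only: pm1 power2_eq_square mult.assoc)
  finally show ?thesis .
qed

section \<open>Two 3-dissections\<close>

lemma of_nat_theta_exponent: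
  "2 * int (theta_exponent \<alpha> \<beta> j) = int \<alpha> * (j * j + j) + int \<beta> * (j * j - j)"
proof -
  have "2 * int (theta_exponent \<alpha> \<beta> j)
      = int \<alpha> * (2 * int (triangular j)) + int \<beta> * (2 * int (triangular (- j)))"
    unfolding theta_exponent_def by (simp add: algebra_simps)
  also have "\<dots> = int \<alpha> * (j * j + j) + int \<beta> * (j * j - j)"
    using of_nat_triangular[of j] of_nat_triangular[of "- j"] by simp
  finally show ?thesis .
qed

lemma theta_exponent_eqI:
  "int \<alpha> * (j * j + j) + int \<beta> * (j * j - j) = int \<alpha>' * (j' * j' + j') + int \<beta>' * (j' * j' - j') + 2 * int d
    \<Longrightarrow> theta_exponent \<alpha> \<beta> j = theta_exponent \<alpha>' \<beta>' j' + d"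
  using of_nat_theta_exponent[of \<alpha> \<beta> j] of_nat_theta_exponent[of \<alpha>' \<beta>' j'] by linarith

lemma theta_term_minus_1:
  "theta_term \<alpha> \<beta> (-1 :: 'a::comm_ring_1) j = (if even j then 1 else -1) * fps_X ^ theta_exponent \<alpha> \<beta> j"
proof -
  have "even (nat (j * j)) \<longleftrightarrow> even j"
    by (simp add: even_nat_iff)
  then show ?thesis
    unfolding theta_term_def by (simp add: minus_one_power_iff)
qed

lemma theta_term_1: "theta_term \<alpha> \<beta> 1 j = fps_X ^ theta_exponent \<alpha> \<beta> j"
  by (simp add: theta_term_def)

lemma theta_term_1_1_residues:
  "theta_term 1 1 (-1 :: 'a::comm_ring_1) (3 * m - 1) = - fps_X * theta_term 3 15 (-1) m"
  "theta_term 1 1 (-1 :: 'a) (3 * m) = theta_term 9 9 (-1) m"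
  "theta_term 1 1 (-1 :: 'a) (3 * m + 1) = - fps_X * theta_term 3 15 (-1) (- m)"
proof -
  have "theta_exponent 1 1 (3 * m - 1) = theta_exponent 3 15 m + 1"
    "theta_exponent 1 1 (3 * m) = theta_exponent 9 9 m + 0"
    "theta_exponent 1 1 (3 * m + 1) = theta_exponent 3 15 (- m) + 1"
    by (rule theta_exponent_eqI, simp add: algebra_simps)+
  moreover have "even (3 * m - 1) = odd m" "even (3 * m) = even m" "even (3 * m + 1) = odd m"
    by simp_all
  ultimately show
    "theta_term 1 1 (-1 :: 'a::comm_ring_1) (3 * m - 1) = - fps_X * theta_term 3 15 (-1) m"
    "theta_term 1 1 (-1 :: 'a) (3 * m) = theta_term 9 9 (-1) m"
    "theta_term 1 1 (-1 :: 'a) (3 * m + 1) = - fps_X * theta_term 3 15 (-1) (- m)"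
    unfolding theta_term_minus_1 by (simp_all add: power_add mult_ac)
qed

lemma theta_term_1_3_residues:
  "theta_term 1 3 (1 :: 'a::comm_ring_1) (3 * m - 1) = theta_term 3 6 1 (2 * (- m) + 1)"
  "theta_term 1 3 (1 :: 'a) (3 * m) = theta_term 3 6 1 (2 * m)"
  "theta_term 1 3 (1 :: 'a) (3 * m + 1) = fps_X * theta_term 9 27 1 (- m)"
proof -
  have "theta_exponent 1 3 (3 * m - 1) = theta_exponent 3 6 (2 * (- m) + 1) + 0"
    "theta_exponent 1 3 (3 * m) = theta_exponent 3 6 (2 * m) + 0"
    "theta_exponent 1 3 (3 * m + 1) = theta_exponent 9 27 (- m) + 1"
    by (rule theta_exponent_eqI, simp add: algebra_simps)+
  then show
    "theta_term 1 3 (1 :: 'a::comm_ring_1) (3 * m - 1) = theta_term 3 6 1 (2 * (- m) + 1)"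
    "theta_term 1 3 (1 :: 'a) (3 * m) = theta_term 3 6 1 (2 * m)"
    "theta_term 1 3 (1 :: 'a) (3 * m + 1) = fps_X * theta_term 9 27 1 (- m)"
    unfolding theta_term_1 by (simp_all add: power_add mult_ac)
qed

lemma sum_int_residues_3:
  fixes M :: int
  assumes "M \<ge> 0"
  shows "(\<Sum>j\<in>{-(3*M+1)..3*M+1}. F j) = (\<Sum>m\<in>{-M..M}. F (3*m - 1) + F (3*m) + F (3*m + 1))"
proof -
  have "(\<Sum>j\<in>{-(3*M+1)..3*M+1}. F j) = (\<Sum>p\<in>{-M..M} \<times> {-1..1::int}. F (3 * fst p + snd p))"
  proof (rule sum.reindex_bij_witness[where i = "\<lambda>p. 3 * fst p + snd p" and j = "\<lambda>x. ((x + 1) div 3, x - 3 * ((x + 1) div 3))"])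
    fix a :: int assume "a \<in> {-(3*M+1)..3*M+1}"
    show "3 * fst ((a + 1) div 3, a - 3 * ((a + 1) div 3)) + snd ((a + 1) div 3, a - 3 * ((a + 1) div 3)) = a"
      by simp
    show "((a + 1) div 3, a - 3 * ((a + 1) div 3)) \<in> {-M..M} \<times> {-1..1}"
      using \<open>a \<in> _\<close> by (auto; presburger?)
  next
    fix b :: "int \<times> int" assume "b \<in> {-M..M} \<times> {-1..1}"
    then obtain m r where b: "b = (m, r)" "-M \<le> m" "m \<le> M" "-1 \<le> r" "r \<le> 1" by auto
    show "((3 * fst b + snd b + 1) div 3, 3 * fst b + snd b - 3 * ((3 * fst b + snd b + 1) div 3)) = b"
      using b by (auto; presburger?)
    show "3 * fst b + snd b \<in> {-(3*M+1)..3*M+1}" using b by auto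
  qed simp
  also have "\<dots> = (\<Sum>m\<in>{-M..M}. \<Sum>r\<in>{-1..1::int}. F (3 * m + r))"
    by (simp add: sum.cartesian_product case_prod_beta)
  also have "\<dots> = (\<Sum>m\<in>{-M..M}. F (3*m - 1) + F (3*m) + F (3*m + 1))"
  proof (rule sum.cong[OF refl])
    fix m
    have "{-1..1::int} = {-1, 0, 1}" by auto
    then show "(\<Sum>r\<in>{-1..1::int}. F (3 * m + r)) = F (3*m - 1) + F (3*m) + F (3*m + 1)"
      by (simp add: algebra_simps)
  qed
  finally show ?thesis .
qed

lemma sum_int_residues_2:
  fixes M :: int
  assumes "M \<ge> 0"
  shows "(\<Sum>k\<in>{-(2*M)..2*M+1}. F k) = (\<Sum>m\<in>{-M..M}. F (2*m) + F (2*m + 1))"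
proof -
  have "(\<Sum>k\<in>{-(2*M)..2*M+1}. F k) = (\<Sum>p\<in>{-M..M} \<times> {0..1::int}. F (2 * fst p + snd p))"
  proof (rule sum.reindex_bij_witness[where i = "\<lambda>p. 2 * fst p + snd p" and j = "\<lambda>x. (x div 2, x mod 2)"])
    fix a :: int assume "a \<in> {-(2*M)..2*M+1}"
    show "2 * fst (a div 2, a mod 2) + snd (a div 2, a mod 2) = a" by simp
    show "(a div 2, a mod 2) \<in> {-M..M} \<times> {0..1}"
      using \<open>a \<in> _\<close> by (auto; presburger?)
  next
    fix b :: "int \<times> int" assume "b \<in> {-M..M} \<times> {0..1}"
    then obtain m r where b: "b = (m, r)" "-M \<le> m" "m \<le> M" "0 \<le> r" "r \<le> 1" by auto
    show "((2 * fst b + snd b) div 2, (2 * fst b + snd b) mod 2) = b"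
      using b by (auto; presburger?)
    show "2 * fst b + snd b \<in> {-(2*M)..2*M+1}" using b by auto
  qed simp
  also have "\<dots> = (\<Sum>m\<in>{-M..M}. \<Sum>r\<in>{0..1::int}. F (2 * m + r))"
    by (simp add: sum.cartesian_product case_prod_beta)
  also have "\<dots> = (\<Sum>m\<in>{-M..M}. F (2*m) + F (2*m + 1))"
  proof (rule sum.cong[OF refl])
    fix m
    have "{0..1::int} = {0, 1}" by auto
    then show "(\<Sum>r\<in>{0..1::int}. F (2 * m + r)) = F (2*m) + F (2*m + 1)"
      by simp
  qed
  finally show ?thesis .
qed

lemma sum_int_reflect: "(\<Sum>m\<in>{-M..M::int}. F (- m)) = (\<Sum>m\<in>{-M..M}. F m)"
  by (rule sum.reindex_bij_witness[where i = uminus and j = uminus]) auto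

lemma sum_int_reflect_pair:
  fixes x :: "'a::comm_ring_1" and M :: int
  shows "(\<Sum>m\<in>{-M..M}. - x * B m + A m + - x * B (- m))
    = (\<Sum>m\<in>{-M..M}. A m) - 2 * x * (\<Sum>m\<in>{-M..M}. B m)"
proof -
  have "(\<Sum>m\<in>{-M..M}. - x * B m + A m + - x * B (- m))
      = (\<Sum>m\<in>{-M..M}. A m) - x * (\<Sum>m\<in>{-M..M}. B m) - x * (\<Sum>m\<in>{-M..M}. B (- m))"
    by (simp add: sum.distrib sum_subtractf sum_distrib_left)
  also have "(\<Sum>m\<in>{-M..M}. B (- m)) = (\<Sum>m\<in>{-M..M}. B m)"
    by (rule sum_int_reflect)
  finally show ?thesis
    by (simp only: mult_2 distrib_right diff_diff_eq)
qed

lemma sum_int_interleave: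
  fixes x :: "'a::comm_ring_1" and M :: int
  assumes "M \<ge> 0"
  shows "(\<Sum>m\<in>{-M..M}. C (2 * (- m) + 1) + C (2 * m) + x * B (- m))
      = (\<Sum>k\<in>{-(2*M)..2*M+1}. C k) + x * (\<Sum>m\<in>{-M..M}. B m)"
proof -
  have "(\<Sum>m\<in>{-M..M}. C (2 * (- m) + 1) + C (2 * m) + x * B (- m))
     = (\<Sum>m\<in>{-M..M}. C (2 * (- m) + 1)) + (\<Sum>m\<in>{-M..M}. C (2 * m)) + x * (\<Sum>m\<in>{-M..M}. B (- m))"
    by (simp add: sum.distrib sum_distrib_left)
  also have "(\<Sum>m\<in>{-M..M}. C (2 * (- m) + 1)) = (\<Sum>m\<in>{-M..M}. C (2 * m + 1))"
    by (rule sum_int_reflect[where F = "\<lambda>m. C (2 * m + 1)"])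
  also have "(\<Sum>m\<in>{-M..M}. B (- m)) = (\<Sum>m\<in>{-M..M}. B m)"
    by (rule sum_int_reflect)
  also have "(\<Sum>m\<in>{-M..M}. C (2 * m + 1)) + (\<Sum>m\<in>{-M..M}. C (2 * m)) = (\<Sum>k\<in>{-(2*M)..2*M+1}. C k)"
    by (subst add.commute) (simp only: sum_int_residues_2[OF assms] sum.distrib)
  finally show ?thesis .
qed

theorem theta_1_1_dissection:
  "theta 1 1 (-1 :: 'a::comm_ring_1) = theta 9 9 (-1) - 2 * fps_X * theta 3 15 (-1)"
proof (rule fps_eq_by_cong)
  fix n :: nat
  define M where "M = int n"
  let ?T = "\<lambda>\<alpha> \<beta>. theta_term \<alpha> \<beta> (-1 :: 'a)"
  have e: "{- int (3 * n + 1)..int (3 * n + 1)} = {- (3 * M + 1)..3 * M + 1}"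
    by (simp add: M_def)
  have "fps_cong n (theta 1 1 (-1 :: 'a)) (\<Sum>j\<in>{- (3 * M + 1)..3 * M + 1}. ?T 1 1 j)"
    using theta_cong_partial_sum[of 1 1 n "3 * n + 1" "-1 :: 'a"] unfolding e by simp
  also have "\<dots> = (\<Sum>m\<in>{-M..M}. ?T 1 1 (3 * m - 1) + ?T 1 1 (3 * m) + ?T 1 1 (3 * m + 1))"
    by (rule sum_int_residues_3) (simp add: M_def)
  also have "\<dots> = (\<Sum>m\<in>{-M..M}. - fps_X * ?T 3 15 m + ?T 9 9 m + - fps_X * ?T 3 15 (- m))"
    by (simp only: theta_term_1_1_residues)
  also have "\<dots> = (\<Sum>m\<in>{-M..M}. ?T 9 9 m) - 2 * fps_X * (\<Sum>m\<in>{-M..M}. ?T 3 15 m)"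
    by (rule sum_int_reflect_pair)
  also have "fps_cong n \<dots> (theta 9 9 (-1) - 2 * fps_X * theta 3 15 (-1))"
    using theta_cong_partial_sum[of 9 9 n n "-1 :: 'a"] theta_cong_partial_sum[of 3 15 n n "-1 :: 'a"]
    by (intro fps_cong_diff fps_cong_mult fps_cong_refl) (simp_all add: M_def fps_cong_sym)
  finally show "fps_cong n (theta 1 1 (-1 :: 'a)) (theta 9 9 (-1) - 2 * fps_X * theta 3 15 (-1))" .
qed

lemma theta_cong_partial_sum_odd:
  assumes "\<alpha> \<ge> 1" "\<beta> \<ge> 1" "int n \<le> 2 * M"
  shows "fps_cong n (theta \<alpha> \<beta> c) (\<Sum>k\<in>{- (2 * M)..2 * M + 1}. theta_term \<alpha> \<beta> c k)"
proof -
  have "{- (2 * M)..2 * M + 1} = insert (2 * M + 1) {- (2 * M)..2 * M}"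
    using assms(3) by auto
  then have "(\<Sum>k\<in>{- (2 * M)..2 * M + 1}. theta_term \<alpha> \<beta> c k)
      = theta_term \<alpha> \<beta> c (2 * M + 1) + (\<Sum>k\<in>{- (2 * M)..2 * M}. theta_term \<alpha> \<beta> c k)"
    by simp
  moreover have "fps_cong n (theta_term \<alpha> \<beta> c (2 * M + 1)) 0"
    by (rule theta_term_cong_0[OF assms(1,2)]) (use assms in linarith)
  moreover have "fps_cong n (theta \<alpha> \<beta> c) (\<Sum>k\<in>{- (2 * M)..2 * M}. theta_term \<alpha> \<beta> c k)"
    using theta_cong_partial_sum[OF assms(1,2), of n "nat (2 * M)" c] assms(3) by simp
  ultimately show ?thesis
    using fps_cong_add[of n 0 "theta_term \<alpha> \<beta> c (2 * M + 1)" "theta \<alpha> \<beta> c"]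
    by (simp add: fps_cong_iff_nth)
qed

theorem theta_1_3_dissection:
  "theta 1 3 (1 :: 'a::comm_ring_1) = theta 3 6 1 + fps_X * theta 9 27 1"
proof (rule fps_eq_by_cong)
  fix n :: nat
  define M where "M = int n"
  let ?T = "\<lambda>\<alpha> \<beta>. theta_term \<alpha> \<beta> (1 :: 'a)"
  have e: "{- int (3 * n + 1)..int (3 * n + 1)} = {- (3 * M + 1)..3 * M + 1}"
    by (simp add: M_def)
  have "fps_cong n (theta 1 3 (1 :: 'a)) (\<Sum>j\<in>{- (3 * M + 1)..3 * M + 1}. ?T 1 3 j)"
    using theta_cong_partial_sum[of 1 3 n "3 * n + 1" "1 :: 'a"] unfolding e by simp
  also have "\<dots> = (\<Sum>m\<in>{-M..M}. ?T 1 3 (3 * m - 1) + ?T 1 3 (3 * m) + ?T 1 3 (3 * m + 1))"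
    by (rule sum_int_residues_3) (simp add: M_def)
  also have "\<dots> = (\<Sum>m\<in>{-M..M}. ?T 3 6 (2 * (- m) + 1) + ?T 3 6 (2 * m) + fps_X * ?T 9 27 (- m))"
    by (simp only: theta_term_1_3_residues)
  also have "\<dots> = (\<Sum>k\<in>{- (2 * M)..2 * M + 1}. ?T 3 6 k) + fps_X * (\<Sum>m\<in>{-M..M}. ?T 9 27 m)"
    by (rule sum_int_interleave) (simp add: M_def)
  also have "fps_cong n \<dots> (theta 3 6 1 + fps_X * theta 9 27 1)"
    using theta_cong_partial_sum_odd[of 3 6 n M "1 :: 'a"] theta_cong_partial_sum[of 9 27 n n "1 :: 'a"]
    by (intro fps_cong_add fps_cong_mult fps_cong_refl) (simp_all add: M_def fps_cong_sym)
  finally show "fps_cong n (theta 1 3 (1 :: 'a)) (theta 3 6 1 + fps_X * theta 9 27 1)" .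
qed

section \<open>The cubic norm\<close>

definition fps_mod3_part :: "nat \<Rightarrow> 'a::comm_ring_1 fps \<Rightarrow> 'a fps" where
  "fps_mod3_part r f = Abs_fps (\<lambda>n. if n mod 3 = r then f $ n else 0)"

definition fps_supported_mod3 :: "nat \<Rightarrow> 'a::comm_ring_1 fps \<Rightarrow> bool" where
  "fps_supported_mod3 r f \<longleftrightarrow> (\<forall>n. n mod 3 \<noteq> r \<longrightarrow> f $ n = 0)"

lemma fps_mod3_part_sum: "f = fps_mod3_part 0 f + fps_mod3_part 1 f + fps_mod3_part 2 f"
  by (rule fps_ext) (auto simp: fps_mod3_part_def)

lemma fps_supported_mod3_part: "fps_supported_mod3 r (fps_mod3_part r f)"
  by (simp add: fps_supported_mod3_def fps_mod3_part_def)

lemma fps_mod3_part_self: "fps_supported_mod3 r u \<Longrightarrow> fps_mod3_part r u = u"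
  by (rule fps_ext) (auto simp: fps_supported_mod3_def fps_mod3_part_def)

lemma fps_mod3_part_other: "fps_supported_mod3 r u \<Longrightarrow> r' \<noteq> r \<Longrightarrow> fps_mod3_part r' u = 0"
  by (rule fps_ext) (auto simp: fps_supported_mod3_def fps_mod3_part_def)

lemma fps_mod3_part_add: "fps_mod3_part r (u + v) = fps_mod3_part r u + fps_mod3_part r v"
  by (rule fps_ext) (simp add: fps_mod3_part_def)

lemma fps_supported_mod3_mult:
  assumes "fps_supported_mod3 i u" "fps_supported_mod3 j v"
  shows "fps_supported_mod3 ((i + j) mod 3) (u * v)"
  unfolding fps_supported_mod3_def
proof (intro allI impI)
  fix n assume n: "n mod 3 \<noteq> (i + j) mod 3"
  have "u $ k * v $ (n - k) = 0" if "k \<in> {0..n}" for k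
  proof (cases "k mod 3 = i \<and> (n - k) mod 3 = j")
    case True
    then have "n mod 3 = (i + j) mod 3"
      using that by (metis atLeastAtMost_iff le_add_diff_inverse mod_add_eq)
    with n show ?thesis
      by simp
  next
    case False
    then show ?thesis
      using assms unfolding fps_supported_mod3_def by auto
  qed
  then show "(u * v) $ n = 0"
    unfolding fps_mult_nth by (intro sum.neutral) blast
qed

text \<open>With \<open>f = f\<^sub>0 + f\<^sub>1 + f\<^sub>2\<close> split by exponents modulo 3 and \<open>\<omega>\<close> a primitive cube root of unity,
  \<open>fps_norm3 f = f(q) f(\<omega>q) f(\<omega>\<^sup>2q) = f\<^sub>0\<^sup>3 + f\<^sub>1\<^sup>3 + f\<^sub>2\<^sup>3 - 3 f\<^sub>0 f\<^sub>1 f\<^sub>2\<close>. The right-hand side needs no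
  roots of unity, is multiplicative, and is a power series in \<open>q\<^sup>3\<close>.\<close>
definition fps_norm3 :: "'a::comm_ring_1 fps \<Rightarrow> 'a fps" where
  "fps_norm3 f = fps_mod3_part 0 f ^ 3 + fps_mod3_part 1 f ^ 3 + fps_mod3_part 2 f ^ 3
     - 3 * fps_mod3_part 0 f * fps_mod3_part 1 f * fps_mod3_part 2 f"

lemma cubic_norm_mult:
  fixes a0 a1 a2 b0 b1 b2 :: "'a::comm_ring_1"
  shows "(a0^3 + a1^3 + a2^3 - 3*a0*a1*a2) * (b0^3 + b1^3 + b2^3 - 3*b0*b1*b2)
    = (a0*b0 + a1*b2 + a2*b1)^3 + (a0*b1 + a1*b0 + a2*b2)^3 + (a0*b2 + a2*b0 + a1*b1)^3
      - 3 * (a0*b0 + a1*b2 + a2*b1) * (a0*b1 + a1*b0 + a2*b2) * (a0*b2 + a2*b0 + a1*b1)"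
  by (simp add: algebra_simps power3_eq_cube)

lemma fps_supported_mod3_add:
  "fps_supported_mod3 r u \<Longrightarrow> fps_supported_mod3 r v \<Longrightarrow> fps_supported_mod3 r (u + v)"
  by (simp add: fps_supported_mod3_def)

lemma fps_supported_mod3_uminus_numeral_mult:
  "fps_supported_mod3 r B \<Longrightarrow> fps_supported_mod3 r (- (numeral k * B))"
  unfolding fps_supported_mod3_def by (simp add: fps_numeral_fps_const)

lemma fps_mod3_part_mult:
  fixes f g :: "'a::comm_ring_1 fps"
  defines "a0 \<equiv> fps_mod3_part 0 f" and "a1 \<equiv> fps_mod3_part 1 f" and "a2 \<equiv> fps_mod3_part 2 f"
      and "b0 \<equiv> fps_mod3_part 0 g" and "b1 \<equiv> fps_mod3_part 1 g" and "b2 \<equiv> fps_mod3_part 2 g"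
  shows "fps_mod3_part 0 (f * g) = a0*b0 + a1*b2 + a2*b1"
    and "fps_mod3_part 1 (f * g) = a0*b1 + a1*b0 + a2*b2"
    and "fps_mod3_part 2 (f * g) = a0*b2 + a2*b0 + a1*b1"
proof -
  define C0 where "C0 = a0*b0 + a1*b2 + a2*b1"
  define C1 where "C1 = a0*b1 + a1*b0 + a2*b2"
  define C2 where "C2 = a0*b2 + a2*b0 + a1*b1"
  have s: "fps_supported_mod3 0 a0" "fps_supported_mod3 1 a1" "fps_supported_mod3 2 a2"
    "fps_supported_mod3 0 b0" "fps_supported_mod3 1 b1" "fps_supported_mod3 2 b2"
    unfolding assms by (simp_all add: fps_supported_mod3_part)
  have "f = a0 + a1 + a2" "g = b0 + b1 + b2"
    unfolding assms by (rule fps_mod3_part_sum)+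
  then have fg: "f * g = C0 + C1 + C2"
    unfolding C0_def C1_def C2_def by (simp add: algebra_simps)
  have c0: "fps_supported_mod3 0 C0"
    unfolding C0_def using fps_supported_mod3_mult[OF s(1) s(4)]
      fps_supported_mod3_mult[OF s(2) s(6)] fps_supported_mod3_mult[OF s(3) s(5)]
    by (intro fps_supported_mod3_add) (simp_all add: numeral_2_eq_2)
  have c1: "fps_supported_mod3 1 C1"
    unfolding C1_def using fps_supported_mod3_mult[OF s(1) s(5)]
      fps_supported_mod3_mult[OF s(2) s(4)] fps_supported_mod3_mult[OF s(3) s(6)]
    by (intro fps_supported_mod3_add) (simp_all add: numeral_2_eq_2)
  have c2: "fps_supported_mod3 2 C2"
    unfolding C2_def using fps_supported_mod3_mult[OF s(1) s(6)]
      fps_supported_mod3_mult[OF s(3) s(4)] fps_supported_mod3_mult[OF s(2) s(5)]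
    by (intro fps_supported_mod3_add) (simp_all add: numeral_2_eq_2)
  have z: "fps_mod3_part 0 C1 = 0" "fps_mod3_part 0 C2 = 0" "fps_mod3_part 1 C0 = 0"
    "fps_mod3_part 1 C2 = 0" "fps_mod3_part 2 C0 = 0" "fps_mod3_part 2 C1 = 0"
    using fps_mod3_part_other[OF c0] fps_mod3_part_other[OF c1] fps_mod3_part_other[OF c2]
    by simp_all
  show "fps_mod3_part 0 (f * g) = a0*b0 + a1*b2 + a2*b1"
    unfolding fg fps_mod3_part_add fps_mod3_part_self[OF c0] z by (simp add: C0_def)
  show "fps_mod3_part 1 (f * g) = a0*b1 + a1*b0 + a2*b2"
    unfolding fg fps_mod3_part_add fps_mod3_part_self[OF c1] z by (simp add: C1_def)
  show "fps_mod3_part 2 (f * g) = a0*b2 + a2*b0 + a1*b1"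
    unfolding fg fps_mod3_part_add fps_mod3_part_self[OF c2] z by (simp add: C2_def)
qed

lemma fps_norm3_mult: "fps_norm3 (f * g) = fps_norm3 f * fps_norm3 g"
  unfolding fps_norm3_def fps_mod3_part_mult by (rule cubic_norm_mult[symmetric])

lemma fps_mod3_part_1: "fps_mod3_part r 1 = (if r = 0 then 1 else 0)"
  by (rule fps_ext) (auto simp: fps_mod3_part_def)

lemma fps_norm3_1[simp]: "fps_norm3 1 = 1"
  by (simp add: fps_norm3_def fps_mod3_part_1)

lemma fps_norm3_prod: "fps_norm3 (\<Prod>k\<in>S. f k) = (\<Prod>k\<in>S. fps_norm3 (f k))"
  by (induction S rule: infinite_finite_induct) (simp_all add: fps_norm3_mult)

lemma fps_cong_mod3_part:
  "fps_cong n f g \<Longrightarrow> fps_cong n (fps_mod3_part r f) (fps_mod3_part r g)"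
  by (simp add: fps_cong_iff_nth fps_mod3_part_def)

lemma fps_cong_norm3: "fps_cong n f g \<Longrightarrow> fps_cong n (fps_norm3 f) (fps_norm3 g)"
  unfolding fps_norm3_def
  by (intro fps_cong_diff fps_cong_add fps_cong_power fps_cong_mult fps_cong_mod3_part fps_cong_refl)
    assumption+

lemma fps_norm3_infprod:
  assumes f: "fps_near_one f"
  shows "fps_norm3 (fps_infprod f) = fps_infprod (\<lambda>k. fps_norm3 (f k))"
proof (rule sym, rule fps_infprod_eqI)
  show "fps_near_one (\<lambda>k. fps_norm3 (f k))"
    using f unfolding fps_near_one_def by (metis fps_cong_norm3 fps_norm3_1)
next
  fix n
  have "fps_cong n (fps_norm3 (fps_infprod f)) (fps_norm3 (\<Prod>k<n. f k))"
    by (rule fps_cong_norm3[OF fps_infprod_cong[OF f]]) simp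
  then show "\<exists>N\<ge>n. fps_cong n (fps_norm3 (fps_infprod f)) (\<Prod>k<N. fps_norm3 (f k))"
    unfolding fps_norm3_prod by blast
qed

lemma fps_mod3_part_1_plus_monomial:
  "fps_mod3_part r (1 + fps_const c * fps_X ^ e)
     = (if r = 0 then 1 else 0) + (if e mod 3 = r then fps_const c * fps_X ^ e else 0)"
  by (rule fps_ext) (auto simp: fps_mod3_part_def)

lemma fps_norm3_1_plus_monomial:
  assumes "e mod 3 \<noteq> 0"
  shows "fps_norm3 (1 + fps_const c * fps_X ^ e) = 1 + fps_const (c ^ 3) * fps_X ^ (3 * e)"
proof -
  let ?m = "fps_const c * fps_X ^ e"
  have cube: "?m ^ 3 = fps_const (c ^ 3) * fps_X ^ (3 * e)"
    by (simp add: power_mult_distrib fps_const_power power_mult mult.commute)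
  consider "e mod 3 = 1" | "e mod 3 = 2"
    using assms by linarith
  then show ?thesis
  proof cases
    case 1
    then have "fps_mod3_part 0 (1 + ?m) = 1" "fps_mod3_part 1 (1 + ?m) = ?m"
      "fps_mod3_part 2 (1 + ?m) = 0"
      by (simp_all add: fps_mod3_part_1_plus_monomial)
    then show ?thesis
      unfolding fps_norm3_def cube[symmetric] by simp
  next
    case 2
    then have "fps_mod3_part 0 (1 + ?m) = 1" "fps_mod3_part 1 (1 + ?m) = 0"
      "fps_mod3_part 2 (1 + ?m) = ?m"
      by (simp_all add: fps_mod3_part_1_plus_monomial)
    then show ?thesis
      unfolding fps_norm3_def cube[symmetric] by simp
  qed
qed

lemma fps_norm3_1_plus_monomial_dvd:
  "e mod 3 = 0 \<Longrightarrow> fps_norm3 (1 + fps_const c * fps_X ^ e) = (1 + fps_const c * fps_X ^ e) ^ 3"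
  by (simp add: fps_norm3_def fps_mod3_part_1_plus_monomial)

lemma fps_norm3_ap_prod:
  assumes "r \<ge> 1" "m \<ge> 1" "r mod 3 \<noteq> 0" "3 dvd m"
  shows "fps_norm3 (ap_prod c r m) = ap_prod (c ^ 3) (3 * r) (3 * m)"
proof -
  have "fps_norm3 (1 + fps_const c * fps_X ^ (r + m * k))
      = 1 + fps_const (c ^ 3) * fps_X ^ (3 * r + 3 * m * k)" for k
  proof -
    have e: "(r + m * k) mod 3 \<noteq> 0"
      using assms(3,4) by (auto elim!: dvdE simp: mult.assoc)
    show ?thesis
      unfolding fps_norm3_1_plus_monomial[OF e] by (simp add: distrib_left mult.assoc)
  qed
  then show ?thesis
    unfolding ap_prod_def fps_norm3_infprod[OF fps_near_one_ap_prod[OF assms(1,2)]] by simp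
qed

lemma fps_norm3_ap_prod_dvd:
  assumes "r \<ge> 1" "m \<ge> 1" "3 dvd r" "3 dvd m"
  shows "fps_norm3 (ap_prod c r m) = ap_prod c r m ^ 3"
proof -
  have "fps_norm3 (1 + fps_const c * fps_X ^ (r + m * k)) = (1 + fps_const c * fps_X ^ (r + m * k)) ^ 3"
    for k
    using assms(3,4) by (intro fps_norm3_1_plus_monomial_dvd) simp
  then show ?thesis
    unfolding ap_prod_def fps_norm3_infprod[OF fps_near_one_ap_prod[OF assms(1,2)]]
    by (simp add: fps_infprod_power[OF fps_near_one_ap_prod[OF assms(1,2)]])
qed

lemma euler_prod_residue_classes_3:
  assumes "k \<ge> 1"
  shows "euler_prod k = ap_prod (-1) k (3 * k) * ap_prod (-1) (2 * k) (3 * k) * euler_prod (3 * k)"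
proof -
  have "euler_prod k = ap_prod (-1) k (3 * k) * ap_prod (-1) (k + k) (3 * k) * ap_prod (-1) (k + 2 * k) (3 * k)"
    unfolding euler_prod_eq_ap_prod[OF assms] by (rule ap_prod_residue_classes_3[OF assms assms])
  also have "ap_prod (-1) (k + 2 * k) (3 * k) = euler_prod (3 * k)"
    using assms by (simp add: euler_prod_eq_ap_prod)
  finally show ?thesis
    by (simp add: mult_2)
qed

lemma fps_norm3_euler_prod:
  assumes k: "k \<ge> 1" "k mod 3 \<noteq> 0"
  shows "fps_norm3 (euler_prod k :: 'a::comm_ring_1 fps) * euler_prod (9 * k) = euler_prod (3 * k) ^ 4"
proof -
  let ?P = "ap_prod (-1 :: 'a) (3 * k) (9 * k) * ap_prod (-1) (6 * k) (9 * k)"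
  have "(2 * k) mod 3 \<noteq> 0"
    using k(2) by presburger
  then have N: "fps_norm3 (euler_prod k :: 'a fps) = ?P * euler_prod (3 * k) ^ 3"
    using k
    by (simp add: euler_prod_residue_classes_3[OF k(1)] fps_norm3_mult fps_norm3_ap_prod
        fps_norm3_ap_prod_dvd euler_prod_eq_ap_prod[of "3 * k"])
  have E: "?P * euler_prod (9 * k) = (euler_prod (3 * k) :: 'a fps)"
    using euler_prod_residue_classes_3[of "3 * k", where 'a = 'a] k(1) by simp
  have "fps_norm3 (euler_prod k :: 'a fps) * euler_prod (9 * k)
      = euler_prod (3 * k) ^ 3 * (?P * euler_prod (9 * k))"
    unfolding N by (simp only: mult_ac)
  also have "\<dots> = euler_prod (3 * k) ^ 4"
    unfolding E by (simp only: power3_eq_cube power4_eq_xxxx)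
  finally show ?thesis .
qed

lemma fps_supported_mod3_X: "fps_supported_mod3 1 fps_X"
  by (simp add: fps_supported_mod3_def fps_X_def)

lemma fps_norm3_add_X_mult:
  assumes "fps_supported_mod3 0 A" "fps_supported_mod3 0 B"
  shows "fps_norm3 (A + fps_X * B) = A ^ 3 + fps_X ^ 3 * B ^ 3"
proof -
  have XB: "fps_supported_mod3 1 (fps_X * B)"
    using fps_supported_mod3_mult[OF fps_supported_mod3_X assms(2)] by simp
  have "fps_mod3_part 0 (A + fps_X * B) = A" "fps_mod3_part 1 (A + fps_X * B) = fps_X * B"
    "fps_mod3_part 2 (A + fps_X * B) = 0"
    unfolding fps_mod3_part_add fps_mod3_part_self[OF assms(1)] fps_mod3_part_self[OF XB]
    using fps_mod3_part_other[OF assms(1)] fps_mod3_part_other[OF XB] by simp_all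
  then show ?thesis
    unfolding fps_norm3_def by (simp add: power_mult_distrib)
qed

lemma fps_supported_mod3_theta:
  assumes "3 dvd \<alpha>" "3 dvd \<beta>"
  shows "fps_supported_mod3 0 (theta \<alpha> \<beta> c)"
  unfolding fps_supported_mod3_def
proof (intro allI impI)
  fix n :: nat assume n: "n mod 3 \<noteq> 0"
  have "3 dvd theta_exponent \<alpha> \<beta> j" for j
    using assms unfolding theta_exponent_def by simp
  then have "theta_term \<alpha> \<beta> c j $ n = 0" for j
    using n unfolding theta_term_def by (auto simp: fps_X_power_mult_right_nth)
  then show "theta \<alpha> \<beta> c $ n = 0"
    unfolding theta_def by (simp add: fps_sum_nth)
qed

section \<open>The modular equation\<close>

lemma theta_norm3_identity_1:
  "(theta 9 9 (-1) ^ 3 - 8 * fps_X ^ 3 * theta 3 15 (-1) ^ 3) * fps_norm3 (euler_prod 2)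
     = fps_norm3 (euler_prod 1 :: 'a::field fps) ^ 2"
proof -
  let ?A = "theta 9 9 (-1 :: 'a)" and ?B = "theta 3 15 (-1 :: 'a)"
  have A: "fps_supported_mod3 0 ?A" and B: "fps_supported_mod3 0 (- (2 * ?B))"
    by (simp_all add: fps_supported_mod3_theta fps_supported_mod3_uminus_numeral_mult)
  have "theta 1 1 (-1 :: 'a) = ?A + fps_X * (- (2 * ?B))"
    unfolding theta_1_1_dissection by (simp add: algebra_simps)
  then have "fps_norm3 (theta 1 1 (-1 :: 'a)) = ?A ^ 3 + fps_X ^ 3 * (- (2 * ?B)) ^ 3"
    using fps_norm3_add_X_mult[OF A B] by simp
  also have "\<dots> = ?A ^ 3 - 8 * fps_X ^ 3 * ?B ^ 3"
    by (simp add: power_mult_distrib)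
  finally have "fps_norm3 (theta 1 1 (-1 :: 'a)) = ?A ^ 3 - 8 * fps_X ^ 3 * ?B ^ 3" .
  moreover have "fps_norm3 (theta 1 1 (-1 :: 'a) * euler_prod 2) = fps_norm3 (euler_prod 1 ^ 2)"
    using theta_phi_eta_quotient[of 1, where 'a = 'a] by simp
  ultimately show ?thesis
    by (simp add: fps_norm3_mult power2_eq_square)
qed

lemma theta_norm3_identity_2:
  "(theta 3 6 1 ^ 3 + fps_X ^ 3 * theta 9 27 1 ^ 3) * fps_norm3 (euler_prod 1)
     = fps_norm3 (euler_prod 2 :: 'a::field fps) ^ 2"
proof -
  have "fps_norm3 (theta 1 3 (1 :: 'a)) = theta 3 6 1 ^ 3 + fps_X ^ 3 * theta 9 27 1 ^ 3"
    unfolding theta_1_3_dissection by (rule fps_norm3_add_X_mult) (simp_all add: fps_supported_mod3_theta)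
  moreover have "fps_norm3 (theta 1 3 (1 :: 'a) * euler_prod 1) = fps_norm3 (euler_prod 2 ^ 2)"
    using theta_psi_eta_quotient[of 1, where 'a = 'a] by simp
  ultimately show ?thesis
    by (simp add: fps_norm3_mult power2_eq_square)
qed

text \<open>Below \<open>u\<^sub>k\<close> stands for \<open>E(q\<^sup>k)\<close>, \<open>t\<close> for \<open>q\<^sup>3\<close>, \<open>n\<^sub>1, n\<^sub>2\<close> for the norms of \<open>E(q), E(q\<^sup>2)\<close>,
  and \<open>a, b, d, p\<close> for the theta series in the two norm identities.\<close>
lemma eta_quotient_relation_1:
  fixes u3 u6 u9 u18 t a b n1 n2 :: "'a::field"
  assumes nz: "u3 \<noteq> 0" "u6 \<noteq> 0" "u9 \<noteq> 0" "u18 \<noteq> 0"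
    and "n1 * u9 = u3 ^ 4" "n2 * u18 = u6 ^ 4" "a * u18 = u9 ^ 2" "b * u6 * u9 = u3 * u18 ^ 2"
    and rel: "(a ^ 3 - 8 * t * b ^ 3) * n2 = n1 ^ 2"
  shows "u3 ^ 8 * u18 ^ 4 / (u6 ^ 4 * u9 ^ 8) = 1 - 8 * (t * u3 ^ 3 * u18 ^ 9 / (u6 ^ 3 * u9 ^ 9))"
proof -
  have "n1 = u3 ^ 4 / u9" "n2 = u6 ^ 4 / u18" "a = u9 ^ 2 / u18" "b = u3 * u18 ^ 2 / (u6 * u9)"
    using assms by (simp_all add: field_simps)
  then have "u6 ^ 4 * u9 ^ 6 / u18 ^ 4 * (1 - 8 * (t * u3 ^ 3 * u18 ^ 9 / (u6 ^ 3 * u9 ^ 9)))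
      = u6 ^ 4 * u9 ^ 6 / u18 ^ 4 * (u3 ^ 8 * u18 ^ 4 / (u6 ^ 4 * u9 ^ 8))"
    using rel nz by (simp add: field_simps; algebra)
  moreover have "u6 ^ 4 * u9 ^ 6 / u18 ^ 4 \<noteq> 0"
    using nz by simp
  ultimately show ?thesis
    by (metis mult_left_cancel)
qed

lemma eta_quotient_relation_2:
  fixes u3 u6 u9 u18 t d p n1 n2 :: "'a::field"
  assumes nz: "u3 \<noteq> 0" "u6 \<noteq> 0" "u9 \<noteq> 0" "u18 \<noteq> 0"
    and "n1 * u9 = u3 ^ 4" "n2 * u18 = u6 ^ 4" "d * u3 * u18 = u6 * u9 ^ 2" "p * u9 = u18 ^ 2"
    and rel: "(d ^ 3 + t * p ^ 3) * n1 = n2 ^ 2"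
  shows "u6 ^ 5 * u18 / (u3 * u9 ^ 5) = 1 + t * u3 ^ 3 * u18 ^ 9 / (u6 ^ 3 * u9 ^ 9)"
proof -
  have "n1 = u3 ^ 4 / u9" "n2 = u6 ^ 4 / u18" "d = u6 * u9 ^ 2 / (u3 * u18)" "p = u18 ^ 2 / u9"
    using assms by (simp_all add: field_simps)
  then have "u3 * u6 ^ 3 * u9 ^ 5 / u18 ^ 3 * (1 + t * u3 ^ 3 * u18 ^ 9 / (u6 ^ 3 * u9 ^ 9))
      = u3 * u6 ^ 3 * u9 ^ 5 / u18 ^ 3 * (u6 ^ 5 * u18 / (u3 * u9 ^ 5))"
    using rel nz by (simp add: field_simps; algebra)
  moreover have "u3 * u6 ^ 3 * u9 ^ 5 / u18 ^ 3 \<noteq> 0"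
    using nz by simp
  ultimately show ?thesis
    by (metis mult_left_cancel)
qed

lemma eta_quotient_relation:
  fixes u3 u6 u9 u18 T :: "'a::field"
  assumes nz: "u3 \<noteq> 0" "u6 \<noteq> 0" "u9 \<noteq> 0" "u18 \<noteq> 0"
    and X: "u3 ^ 8 * u18 ^ 4 / (u6 ^ 4 * u9 ^ 8) = 1 - 8 * T"
    and Xi: "u6 ^ 5 * u18 / (u3 * u9 ^ 5) = 1 + T"
  shows "(u3 ^ 5 * u6 ^ 5 * u18 ^ 5 / u9 ^ 15) ^ 6
    = (u6 ^ 5 * u18 / (u3 * u9 ^ 5)) ^ 10 * (9 - 8 * (u6 ^ 5 * u18 / (u3 * u9 ^ 5))) ^ 5"
proof -
  have "9 - 8 * (u6 ^ 5 * u18 / (u3 * u9 ^ 5)) = u3 ^ 8 * u18 ^ 4 / (u6 ^ 4 * u9 ^ 8)"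
    unfolding X Xi by simp
  moreover have "(u3 ^ 5 * u6 ^ 5 * u18 ^ 5 / u9 ^ 15) ^ 6
      = (u6 ^ 5 * u18 / (u3 * u9 ^ 5)) ^ 10 * (u3 ^ 8 * u18 ^ 4 / (u6 ^ 4 * u9 ^ 8)) ^ 5"
    using nz by (simp add: field_simps flip: power_mult power_add)
  ultimately show ?thesis
    by simp
qed

lemma fps_to_fls_divide:
  fixes x y :: "'a::field fps"
  assumes "y $ 0 \<noteq> 0"
  shows "fps_to_fls (x / y) = fps_to_fls x / fps_to_fls y"
proof -
  have "subdegree y = 0"
    using assms by (simp add: subdegree_eq_0_iff)
  then show ?thesis
    using assms by (simp add: fps_divide_unit fls_times_fps_to_fls fls_inverse_fps_to_fls divide_inverse)
qed

lemma fps_compose_X_power_divide: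
  fixes x y :: "'a::field fps"
  assumes "k \<ge> 1" "y $ 0 \<noteq> 0"
  shows "(x / y) oo fps_X ^ k = (x oo fps_X ^ k) / (y oo fps_X ^ k)"
proof -
  have X0: "(fps_X ^ k :: 'a fps) $ 0 = 0"
    using assms(1) by simp
  have "(x / y) oo fps_X ^ k = (x oo fps_X ^ k) * inverse (y oo fps_X ^ k)"
    using assms(2)
    by (simp add: fps_divide_unit fps_compose_mult_distrib[OF X0] fps_inverse_compose[OF X0])
  also have "\<dots> = (x oo fps_X ^ k) / (y oo fps_X ^ k)"
    using assms by (simp add: fps_divide_unit)
  finally show ?thesis .
qed

lemma euler_Ek_compose_X_power:
  assumes "k \<ge> 1" "j \<ge> 1"
  shows "euler_Ek k oo fps_X ^ j = euler_Ek (j * k)"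
proof -
  have X0: "(fps_X ^ j :: rat fps) $ 0 = 0" "(fps_X ^ k :: rat fps) $ 0 = 0"
    using assms by simp_all
  have "euler_Ek k oo fps_X ^ j = euler_E oo (fps_X ^ k oo fps_X ^ j)"
    unfolding euler_Ek_def by (rule fps_compose_assoc[symmetric, OF X0])
  also have "fps_X ^ k oo fps_X ^ j = (fps_X ^ (j * k) :: rat fps)"
    by (simp add: fps_X_power_compose[OF X0(1)] power_mult)
  finally show ?thesis
    unfolding euler_Ek_def .
qed

lemma euler_Ek_nth_0: "k \<ge> 1 \<Longrightarrow> euler_Ek k $ 0 = 1"
  by (simp add: euler_Ek_eq_euler_prod euler_prod_nth_0)

lemma gamma_fps_compose_X3:
  "gamma_fps oo fps_X ^ 3 = euler_Ek 3 ^ 5 * euler_Ek 6 ^ 5 * euler_Ek 18 ^ 5 / euler_Ek 9 ^ 15"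
  and xi_fps_compose_X3:
  "xi_fps oo fps_X ^ 3 = euler_Ek 6 ^ 5 * euler_Ek 18 / (euler_Ek 3 * euler_Ek 9 ^ 5)"
proof -
  have X0: "(fps_X ^ 3 :: rat fps) $ 0 = 0"
    by simp
  have E: "euler_Ek (Suc 0) oo fps_X ^ 3 = euler_Ek 3" "euler_Ek 2 oo fps_X ^ 3 = euler_Ek 6"
    "euler_Ek 3 oo fps_X ^ 3 = euler_Ek 9" "euler_Ek 6 oo fps_X ^ 3 = euler_Ek 18"
    by (simp_all add: euler_Ek_compose_X_power)
  show "gamma_fps oo fps_X ^ 3 = euler_Ek 3 ^ 5 * euler_Ek 6 ^ 5 * euler_Ek 18 ^ 5 / euler_Ek 9 ^ 15"
    unfolding gamma_fps_def
    by (simp add: fps_compose_X_power_divide euler_Ek_nth_0 fps_nth_power_0 fps_compose_mult_distrib[OF X0]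
        fps_compose_power[OF X0, symmetric] E)
  show "xi_fps oo fps_X ^ 3 = euler_Ek 6 ^ 5 * euler_Ek 18 / (euler_Ek 3 * euler_Ek 9 ^ 5)"
    unfolding xi_fps_def
    by (simp add: fps_compose_X_power_divide euler_Ek_nth_0 fps_nth_power_0 fps_compose_mult_distrib[OF X0]
        fps_compose_power[OF X0, symmetric] E)
qed

lemma gamma_xi_relation_X3:
  "(gamma_fps oo fps_X ^ 3) ^ 6 = (xi_fps oo fps_X ^ 3) ^ 10 * (9 - 8 * (xi_fps oo fps_X ^ 3)) ^ 5"
proof -
  \<comment> \<open>Laurent series over \<open>\<rat>\<close> form a field, so the eta quotients can be handled there.\<close>
  define u where "u k = fps_to_fls (euler_Ek k)" for k
  let ?F = "fps_to_fls :: rat fps \<Rightarrow> rat fls"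
  let ?T = "?F (fps_X ^ 3) * u 3 ^ 3 * u 18 ^ 9 / (u 6 ^ 3 * u 9 ^ 9)"
  note Fsimps = fls_times_fps_to_fls fps_to_fls_power fps_to_fls_numeral fps_to_fls_minus fps_to_fls_plus
  have E0: "euler_Ek k $ 0 = 1" if "k \<in> {3, 6, 9, 18}" for k
    using that by (auto intro: euler_Ek_nth_0)
  have nz: "u 3 \<noteq> 0" "u 6 \<noteq> 0" "u 9 \<noteq> 0" "u 18 \<noteq> 0"
    unfolding u_def using E0 by (auto simp: fps_to_fls_eq_0_iff dest: arg_cong[of _ _ "\<lambda>f. f $ 0"])
  have E: "euler_Ek k = euler_prod k" if "k \<in> {1, 2, 3, 6, 9, 18}" for k
    using that by (auto intro: euler_Ek_eq_euler_prod)
  have n1: "?F (fps_norm3 (euler_prod 1)) * u 9 = u 3 ^ 4"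
    and n2: "?F (fps_norm3 (euler_prod 2)) * u 18 = u 6 ^ 4"
    using arg_cong[OF fps_norm3_euler_prod[of 1], of ?F] arg_cong[OF fps_norm3_euler_prod[of 2], of ?F]
    unfolding u_def by (simp_all add: E Fsimps)
  have "?F (gamma_fps oo fps_X ^ 3) = u 3 ^ 5 * u 6 ^ 5 * u 18 ^ 5 / u 9 ^ 15"
    "?F (xi_fps oo fps_X ^ 3) = u 6 ^ 5 * u 18 / (u 3 * u 9 ^ 5)"
    unfolding gamma_fps_compose_X3 xi_fps_compose_X3 u_def
    by (simp_all add: fps_to_fls_divide E0 fps_nth_power_0 Fsimps)
  moreover have X: "u 3 ^ 8 * u 18 ^ 4 / (u 6 ^ 4 * u 9 ^ 8) = 1 - 8 * ?T"
    by (rule eta_quotient_relation_1[OF nz n1 n2])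
      (use arg_cong[OF theta_phi_eta_quotient[of 9], of ?F] arg_cong[OF theta_s_5s_eta_quotient[of 3], of ?F]
        arg_cong[OF theta_norm3_identity_1, of ?F] in \<open>simp_all add: u_def E Fsimps\<close>)
  moreover have Xi: "u 6 ^ 5 * u 18 / (u 3 * u 9 ^ 5) = 1 + ?T"
    by (rule eta_quotient_relation_2[OF nz n1 n2])
      (use arg_cong[OF theta_s_2s_eta_quotient[of 3], of ?F] arg_cong[OF theta_psi_eta_quotient[of 9], of ?F]
        arg_cong[OF theta_norm3_identity_2, of ?F] in \<open>simp_all add: u_def E Fsimps\<close>)
  ultimately have "?F ((gamma_fps oo fps_X ^ 3) ^ 6)
      = ?F ((xi_fps oo fps_X ^ 3) ^ 10 * (9 - 8 * (xi_fps oo fps_X ^ 3)) ^ 5)"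
    using eta_quotient_relation[OF nz X Xi] by (simp add: Fsimps)
  then show ?thesis
    by (simp only: fps_to_fls_eq_iff)
qed

lemma xi_polynomial:
  fixes x :: "'a::comm_ring_1"
  shows "x ^ 10 * (9 - 8 * x) ^ 5 = 59049 * x ^ 10 - 262440 * x ^ 11 + 466560 * x ^ 12
           - 414720 * x ^ 13 + 184320 * x ^ 14 - 32768 * x ^ 15"
proof -
  have binomial: "(9 - 8 * x) ^ 5
      = 59049 - 262440 * x + 466560 * x ^ 2 - 414720 * x ^ 3 + 184320 * x ^ 4 - 32768 * x ^ 5"
    by (simp add: power_numeral_reduce power2_eq_square algebra_simps)
  have shift: "x ^ m * (c * x ^ k) = c * x ^ (m + k)" "x ^ m * (c * x) = c * x ^ (m + 1)" for m k c
    by (simp_all add: power_add mult_ac)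
  show ?thesis
    by (simp only: binomial distrib_left right_diff_distrib shift) (simp add: mult.commute)
qed

theorem theorem2p1:
  shows "gamma_fps ^ 6 = 59049 * xi_fps ^ 10 - 262440 * xi_fps ^ 11 + 466560 * xi_fps ^ 12
           - 414720 * xi_fps ^ 13 + 184320 * xi_fps ^ 14 - 32768 * xi_fps ^ 15"
proof -
  have X0: "(fps_X ^ 3 :: rat fps) $ 0 = 0"
    by simp
  have "(gamma_fps ^ 6 - xi_fps ^ 10 * (9 - 8 * xi_fps) ^ 5) oo fps_X ^ 3 = 0"
    using gamma_xi_relation_X3
    by (simp add: fps_compose_sub_distrib fps_compose_mult_distrib[OF X0]
        fps_compose_power[OF X0, symmetric])
  then have "gamma_fps ^ 6 = xi_fps ^ 10 * (9 - 8 * xi_fps) ^ 5"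
    by (simp add: fps_compose_eq_0_iff[OF X0])
  then show ?thesis
    unfolding xi_polynomial .
qed

end
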